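(* Let $p$ be a prime and let $e\in\mathcal{B}(\mathbb{Q}_p(\mathbb{N}))$ be an idempotent. For $i\in\mathbb{N}$ let $e_i=e\delta_i\in\mathbb{Q}_p(\mathbb{N})$ be the $i$-th column of the matrix of $e$, and choose $n\in\mathbb{N}$ such that $e_i$ has all entries in $\mathbb{Z}_p$ for every $i>n$. Then there is an idempotent $f\in\mathcal{B}(\mathbb{Q}_p(\mathbb{N}))$ such that $fe=ef=f$, the image of $f$ is the finite-dimensional $\mathbb{Q}_p$-vector space $\sum_{i\in\mathbb{N},\,i\le n}\mathbb{Q}_p e_i$, and $e-f$ is an idempotent with $\|e-f\|\le1$.
   Context: $\mathbb{Q}_p(\mathbb{N})$ is the set of maps $\xi:\mathbb{N}\to\mathbb{Q}_p$ with $|\xi(i)|_p\le1$ for all but finitely many $i$, a $\mathbb{Z}_p$-module under coordinatewise operations, with the topology $\tau$ in which $A\subseteq\mathbb{Q}_p(\mathbb{N})$ is open iff for every finite $P\subseteq\mathbb{N}$ the set $A\cap\big(\prod_{i\in P}\mathbb{Q}_p\times\prod_{j\notin P}\mathbb{Z}_p\big)$ is open in the product topology. $\mathcal{B}(\mathbb{Q}_p(\mathbb{N}))$ is the algebra of $\tau$-continuous $\mathbb{Z}_p$-linear maps, with operator norm $\|T\|=\sup_{\|\xi\|\le1}\|T\xi\|$, $\|\xi\|=\max_i|\xi(i)|_p$. $\delta_i$ is the indicator function of $\{i\}$. *)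

theory Defs
  imports "HOL-Analysis.Analysis" "HOL-Computational_Algebra.Factorial_Ring"
begin

definition padic_abs :: "nat \<Rightarrow> rat \<Rightarrow> real" where
  "padic_abs p q = (if q = 0 then 0 else
     (let (a, b) = quotient_of q in
        real p powr (- (real (multiplicity (int p) a) - real (multiplicity (int p) b)))))"

definition padic_cauchy :: "nat \<Rightarrow> (nat \<Rightarrow> rat) \<Rightarrow> bool" where
  "padic_cauchy p x \<longleftrightarrow> (\<forall>\<epsilon>>0. \<exists>N. \<forall>m\<ge>N. \<forall>n\<ge>N. padic_abs p (x m - x n) < \<epsilon>)"

definition padic_equiv :: "nat \<Rightarrow> (nat \<Rightarrow> rat) \<Rightarrow> (nat \<Rightarrow> rat) \<Rightarrow> bool" where
  "padic_equiv p x y \<longleftrightarrow> (\<lambda>n. padic_abs p (x n - y n)) \<longlonglongrightarrow> 0"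

type_synonym qp = "(nat \<Rightarrow> rat) set"

definition qp_class :: "nat \<Rightarrow> (nat \<Rightarrow> rat) \<Rightarrow> qp" where
  "qp_class p x = {y. padic_cauchy p y \<and> padic_equiv p x y}"

definition Qp :: "nat \<Rightarrow> qp set" where
  "Qp p = {qp_class p x | x. padic_cauchy p x}"

definition qp_rep :: "qp \<Rightarrow> nat \<Rightarrow> rat" where
  "qp_rep A = (SOME x. x \<in> A)"

definition qp_zero :: "nat \<Rightarrow> qp" where "qp_zero p = qp_class p (\<lambda>_. 0)"
definition qp_one :: "nat \<Rightarrow> qp" where "qp_one p = qp_class p (\<lambda>_. 1)"
definition qp_add :: "nat \<Rightarrow> qp \<Rightarrow> qp \<Rightarrow> qp" where
  "qp_add p A B = qp_class p (\<lambda>n. qp_rep A n + qp_rep B n)"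
definition qp_neg :: "nat \<Rightarrow> qp \<Rightarrow> qp" where
  "qp_neg p A = qp_class p (\<lambda>n. - qp_rep A n)"
definition qp_sub :: "nat \<Rightarrow> qp \<Rightarrow> qp \<Rightarrow> qp" where
  "qp_sub p A B = qp_class p (\<lambda>n. qp_rep A n - qp_rep B n)"
definition qp_mult :: "nat \<Rightarrow> qp \<Rightarrow> qp \<Rightarrow> qp" where
  "qp_mult p A B = qp_class p (\<lambda>n. qp_rep A n * qp_rep B n)"

definition qp_norm :: "nat \<Rightarrow> qp \<Rightarrow> real" where
  "qp_norm p A = lim (\<lambda>n. padic_abs p (qp_rep A n))"

definition Zp :: "nat \<Rightarrow> qp set" where
  "Zp p = {a \<in> Qp p. qp_norm p a \<le> 1}"

definition qp_top :: "nat \<Rightarrow> qp topology" where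
  "qp_top p = topology (\<lambda>S. S \<subseteq> Qp p \<and>
     (\<forall>x\<in>S. \<exists>r>0. \<forall>y\<in>Qp p. qp_norm p (qp_sub p y x) < r \<longrightarrow> y \<in> S))"

type_synonym qpseq = "nat \<Rightarrow> qp"

definition QpN :: "nat \<Rightarrow> qpseq set" where
  "QpN p = {\<xi>. (\<forall>i. \<xi> i \<in> Qp p) \<and> finite {i. qp_norm p (\<xi> i) > 1}}"

definition seq_add :: "nat \<Rightarrow> qpseq \<Rightarrow> qpseq \<Rightarrow> qpseq" where
  "seq_add p \<xi> \<eta> = (\<lambda>i. qp_add p (\<xi> i) (\<eta> i))"
definition seq_sub :: "nat \<Rightarrow> qpseq \<Rightarrow> qpseq \<Rightarrow> qpseq" where
  "seq_sub p \<xi> \<eta> = (\<lambda>i. qp_sub p (\<xi> i) (\<eta> i))"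
definition seq_smult :: "nat \<Rightarrow> qp \<Rightarrow> qpseq \<Rightarrow> qpseq" where
  "seq_smult p a \<xi> = (\<lambda>i. qp_mult p a (\<xi> i))"
definition seq_zero :: "nat \<Rightarrow> qpseq" where
  "seq_zero p = (\<lambda>i. qp_zero p)"

definition delta :: "nat \<Rightarrow> nat \<Rightarrow> qpseq" where
  "delta p i = (\<lambda>j. if j = i then qp_one p else qp_zero p)"

definition seq_norm :: "nat \<Rightarrow> qpseq \<Rightarrow> real" where
  "seq_norm p \<xi> = Sup (range (\<lambda>i. qp_norm p (\<xi> i)))"

definition box_top :: "nat \<Rightarrow> nat set \<Rightarrow> qpseq topology" where
  "box_top p P = product_topology
     (\<lambda>i. if i \<in> P then qp_top p else subtopology (qp_top p) (Zp p)) UNIV"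

definition tau :: "nat \<Rightarrow> qpseq topology" where
  "tau p = topology (\<lambda>A. A \<subseteq> QpN p \<and>
     (\<forall>P. finite P \<longrightarrow> openin (box_top p P) (A \<inter> topspace (box_top p P))))"

text \<open>Maps are only considered on the carrier \<open>QpN p\<close>.\<close>
definition zp_linear :: "nat \<Rightarrow> (qpseq \<Rightarrow> qpseq) \<Rightarrow> bool" where
  "zp_linear p T \<longleftrightarrow> (\<forall>\<xi>\<in>QpN p. T \<xi> \<in> QpN p) \<and>
     (\<forall>\<xi>\<in>QpN p. \<forall>\<eta>\<in>QpN p. T (seq_add p \<xi> \<eta>) = seq_add p (T \<xi>) (T \<eta>)) \<and>
     (\<forall>a\<in>Zp p. \<forall>\<xi>\<in>QpN p. T (seq_smult p a \<xi>) = seq_smult p a (T \<xi>))"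

definition bounded_ops :: "nat \<Rightarrow> (qpseq \<Rightarrow> qpseq) set" where
  "bounded_ops p = {T. zp_linear p T \<and> continuous_map (tau p) (tau p) T}"

definition idempotent_op :: "nat \<Rightarrow> (qpseq \<Rightarrow> qpseq) \<Rightarrow> bool" where
  "idempotent_op p T \<longleftrightarrow> T \<in> bounded_ops p \<and> (\<forall>\<xi>\<in>QpN p. T (T \<xi>) = T \<xi>)"

definition op_diff :: "nat \<Rightarrow> (qpseq \<Rightarrow> qpseq) \<Rightarrow> (qpseq \<Rightarrow> qpseq) \<Rightarrow> qpseq \<Rightarrow> qpseq" where
  "op_diff p S T = (\<lambda>\<xi>. seq_sub p (S \<xi>) (T \<xi>))"

definition op_norm :: "nat \<Rightarrow> (qpseq \<Rightarrow> qpseq) \<Rightarrow> real" where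
  "op_norm p T = Sup {seq_norm p (T \<xi>) | \<xi>. \<xi> \<in> QpN p \<and> seq_norm p \<xi> \<le> 1}"

definition qp_span_upto :: "nat \<Rightarrow> nat \<Rightarrow> (nat \<Rightarrow> qpseq) \<Rightarrow> qpseq set" where
  "qp_span_upto p n v = {(\<lambda>j. foldr (qp_add p) (map (\<lambda>i. qp_mult p (c i) (v i j)) [0..<Suc n]) (qp_zero p))
        | c. \<forall>i\<le>n. c i \<in> Qp p}"

end

theory Submission
  imports Defs "HOL-Algebra.Ring"
begin

(* Let V be the Q_p-span of the columns e(delta_i), i <= n; it is finite-dimensional and fixed by e.
   Gaussian elimination with maximal pivots produces a basis v_0, ..., v_(d-1) of V with all entries
   in Z_p and v_k(piv l) = [k = l], and f x = sum_k (e x)(piv k) v_k is an idempotent onto V with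
   f e = e f = f.  On a finitely supported integral vector, (e - f) x is an integral combination of
   the vectors e(delta_i) - f(delta_i), which vanish for i <= n and are integral for i > n because
   the tail columns are.  Writing f = e o f_lift with f_lift landing in a fixed box shows that
   e - f is tau-continuous, and the finitely supported vectors are dense in the integral ones, so
   e - f maps integral vectors to integral vectors: ||e - f|| <= 1. *)

lemma rat_int_fraction:
  obtains a b :: int where "(x::rat) = of_int a / of_int b" "b \<noteq> 0"
proof -
  obtain a b where q: "quotient_of x = (a, b)" by (cases "quotient_of x") auto
  show ?thesis using that[of a b] quotient_of_div[OF q] quotient_of_denom_pos[OF q] by auto
qed

lemma multiplicity_add_ge_min:
  assumes "u + v \<noteq> 0" "\<not> is_unit q"
  shows "min (multiplicity q u) (multiplicity q v) \<le> multiplicity q (u + v)"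
proof -
  let ?m = "min (multiplicity q u) (multiplicity q v)"
  have "q ^ ?m dvd u" "q ^ ?m dvd v" by (rule multiplicity_dvd'; simp)+
  hence "q ^ ?m dvd u + v" by simp
  thus ?thesis using multiplicity_geI[OF assms] by blast
qed

definition Qp_ring :: "nat \<Rightarrow> qp ring" where
  "Qp_ring p = \<lparr>carrier = Qp p, monoid.mult = qp_mult p, one = qp_one p, zero = qp_zero p, add = qp_add p\<rparr>"

lemma istopology_coherent:
  "istopology (\<lambda>A. A \<subseteq> S \<and> (\<forall>i\<in>I. openin (T i) (A \<inter> topspace (T i))))"
  unfolding istopology_def
proof (rule conjI; intro allI impI)
  fix A B
  assume A: "A \<subseteq> S \<and> (\<forall>i\<in>I. openin (T i) (A \<inter> topspace (T i)))"
    and B: "B \<subseteq> S \<and> (\<forall>i\<in>I. openin (T i) (B \<inter> topspace (T i)))"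
  have "A \<inter> B \<inter> topspace (T i) = (A \<inter> topspace (T i)) \<inter> (B \<inter> topspace (T i))" for i
    by blast
  thus "A \<inter> B \<subseteq> S \<and> (\<forall>i\<in>I. openin (T i) (A \<inter> B \<inter> topspace (T i)))"
    using A B by (auto intro: openin_Int)
next
  fix K assume K: "\<forall>A\<in>K. A \<subseteq> S \<and> (\<forall>i\<in>I. openin (T i) (A \<inter> topspace (T i)))"
  have "openin (T i) (\<Union>K \<inter> topspace (T i))" if "i \<in> I" for i
  proof -
    have "openin (T i) (\<Union>((\<lambda>A. A \<inter> topspace (T i)) ` K))"
      using K that by (intro openin_Union) auto
    moreover have "\<Union>((\<lambda>A. A \<inter> topspace (T i)) ` K) = \<Union>K \<inter> topspace (T i)" by blast
    ultimately show ?thesis by simp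
  qed
  thus "\<Union>K \<subseteq> S \<and> (\<forall>i\<in>I. openin (T i) (\<Union>K \<inter> topspace (T i)))"
    using K by blast
qed

locale padic =
  fixes p :: nat
  assumes prime_p: "prime p"
begin

section \<open>The p-adic absolute value on \<open>\<rat>\<close>\<close>

lemma prime_elem_p: "prime_elem (int p)"
  using prime_p by (simp add: prime_imp_prime_elem)

lemma p_gt_1: "real p > 1"
  using prime_gt_1_nat[OF prime_p] by simp

lemma p_pos [simp]: "p > 0"
  using prime_gt_0_nat[OF prime_p] .

definition val :: "int \<Rightarrow> real" where
  "val a = real (multiplicity (int p) a)"

lemma val_mult: "a \<noteq> 0 \<Longrightarrow> b \<noteq> 0 \<Longrightarrow> val (a * b) = val a + val b"
  unfolding val_def using prime_elem_multiplicity_mult_distrib[OF prime_elem_p] by simp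

lemma padic_abs_fraction:
  assumes a: "a \<noteq> 0" and b: "b \<noteq> 0"
  shows "padic_abs p (of_int a / of_int b) = real p powr (val b - val a)"
proof -
  obtain a0 b0 where q: "quotient_of (of_int a / of_int b) = (a0, b0)"
    by (cases "quotient_of (of_int a / of_int b :: rat)") auto
  have b0: "b0 > 0" using quotient_of_denom_pos[OF q] .
  have eq: "(of_int a / of_int b :: rat) = of_int a0 / of_int b0" using quotient_of_div[OF q] .
  have ne: "(of_int a / of_int b :: rat) \<noteq> 0" using a b by simp
  have a0: "a0 \<noteq> 0" using eq ne by auto
  have "(of_int (a * b0) :: rat) = of_int (a0 * b)" using eq b b0 by (simp add: field_simps)
  hence "a * b0 = a0 * b" by linarith
  hence "val a + val b0 = val a0 + val b"
    using val_mult[of a b0] val_mult[of a0 b] a b b0 a0 by auto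
  hence "val b0 - val a0 = val b - val a" by linarith
  thus ?thesis using ne q unfolding padic_abs_def val_def by simp
qed

lemma padic_abs_zero [simp]: "padic_abs p 0 = 0"
  unfolding padic_abs_def by simp

lemma padic_abs_pos: "x \<noteq> 0 \<Longrightarrow> padic_abs p x > 0"
  unfolding padic_abs_def using p_gt_1 by (auto simp: case_prod_beta)

lemma padic_abs_nonneg [simp]: "padic_abs p x \<ge> 0"
  using padic_abs_pos[of x] by (cases "x = 0") auto

lemma padic_abs_eq_0_iff [simp]: "padic_abs p x = 0 \<longleftrightarrow> x = 0"
  using padic_abs_pos[of x] by (cases "x = 0") auto

lemma padic_abs_mult: "padic_abs p (x * y) = padic_abs p x * padic_abs p y"
proof (cases "x = 0 \<or> y = 0")
  case False
  obtain a b where x: "x = of_int a / of_int b" "b \<noteq> 0" by (rule rat_int_fraction)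
  obtain c d where y: "y = of_int c / of_int d" "d \<noteq> 0" by (rule rat_int_fraction)
  have a: "a \<noteq> 0" and c: "c \<noteq> 0" using x y False by auto
  have "x * y = of_int (a * c) / of_int (b * d)" using x y by simp
  hence "padic_abs p (x * y) = real p powr (val (b * d) - val (a * c))"
    using padic_abs_fraction[of "a * c" "b * d"] a c x y by simp
  also have "\<dots> = real p powr (val b - val a) * real p powr (val d - val c)"
    using val_mult a c x y by (simp add: powr_add[symmetric] algebra_simps)
  finally show ?thesis using padic_abs_fraction a c x y by simp
qed auto

lemma padic_abs_one [simp]: "padic_abs p 1 = 1"
  using padic_abs_fraction[of 1 1] by simp

lemma padic_abs_minus [simp]: "padic_abs p (- x) = padic_abs p x"
proof -
  have "multiplicity (int p) (-1) = 0" by (rule multiplicity_unit_right) simp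
  hence "padic_abs p (-1) = 1"
    using padic_abs_fraction[of "-1" 1] unfolding val_def by simp
  thus ?thesis using padic_abs_mult[of "-1" x] by simp
qed

lemma padic_abs_commute: "padic_abs p (x - y) = padic_abs p (y - x)"
  using padic_abs_minus[of "x - y"] by simp

lemma padic_abs_ultrametric: "padic_abs p (x + y) \<le> max (padic_abs p x) (padic_abs p y)"
proof (cases "x = 0 \<or> y = 0 \<or> x + y = 0")
  case False
  obtain a b where x: "x = of_int a / of_int b" "b \<noteq> 0" by (rule rat_int_fraction)
  obtain c d where y: "y = of_int c / of_int d" "d \<noteq> 0" by (rule rat_int_fraction)
  have a: "a \<noteq> 0" and c: "c \<noteq> 0" using x y False by auto
  have s: "x + y = of_int (a * d + c * b) / of_int (b * d)" using x y by (simp add: field_simps)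
  have s0: "a * d + c * b \<noteq> 0"
  proof
    assume "a * d + c * b = 0"
    hence "rat_of_int (a * d + c * b) = 0" by (simp only: of_int_0)
    thus False using s False by simp
  qed
  have "min (val (a * d)) (val (c * b)) \<le> val (a * d + c * b)"
    using multiplicity_add_ge_min[OF s0 prime_elem_not_unit[OF prime_elem_p]] unfolding val_def
    by linarith
  moreover have "val (a * d) = val a + val d" "val (c * b) = val c + val b" "val (b * d) = val b + val d"
    using val_mult a c x y by simp_all
  ultimately have le: "val (b * d) - val (a * d + c * b) \<le> max (val b - val a) (val d - val c)"
    by linarith
  have "padic_abs p (x + y) = real p powr (val (b * d) - val (a * d + c * b))"
    unfolding s using padic_abs_fraction[of "a * d + c * b" "b * d"] s0 x y by simp
  also have "\<dots> \<le> real p powr max (val b - val a) (val d - val c)"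
    using le p_gt_1 by simp
  also have "\<dots> = max (padic_abs p x) (padic_abs p y)"
    using padic_abs_fraction a c x y p_gt_1 by (auto simp: max_def)
  finally show ?thesis .
qed (auto simp: le_max_iff_disj)

lemma padic_abs_triangle: "padic_abs p (x + y) \<le> padic_abs p x + padic_abs p y"
  using padic_abs_ultrametric[of x y] padic_abs_nonneg[of x] padic_abs_nonneg[of y] by linarith

lemma padic_abs_diff_le: "\<bar>padic_abs p a - padic_abs p b\<bar> \<le> padic_abs p (a - b)"
  using padic_abs_triangle[of "a - b" b] padic_abs_triangle[of "b - a" a] padic_abs_commute[of a b]
  by simp

lemma padic_abs_inverse: "padic_abs p (inverse x) = inverse (padic_abs p x)"
proof (cases "x = 0")
  case False
  hence "padic_abs p (inverse x) * padic_abs p x = 1" using padic_abs_mult[of "inverse x" x] by simp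
  thus ?thesis by (metis inverse_unique mult.commute)
qed simp

section \<open>The field \<open>\<rat>\<^sub>p\<close>\<close>

lemma padic_cauchy_abs_Cauchy:
  assumes "padic_cauchy p x"
  shows "Cauchy (\<lambda>n. padic_abs p (x n))"
  unfolding Cauchy_def dist_real_def
proof (intro allI impI)
  fix \<epsilon> :: real assume "\<epsilon> > 0"
  then obtain N where N: "\<forall>m\<ge>N. \<forall>n\<ge>N. padic_abs p (x m - x n) < \<epsilon>"
    using assms unfolding padic_cauchy_def by blast
  show "\<exists>M. \<forall>m\<ge>M. \<forall>n\<ge>M. \<bar>padic_abs p (x m) - padic_abs p (x n)\<bar> < \<epsilon>"
    using N padic_abs_diff_le by (meson order.strict_trans1)
qed

lemma padic_cauchy_abs_convergent: "padic_cauchy p x \<Longrightarrow> convergent (\<lambda>n. padic_abs p (x n))"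
  using padic_cauchy_abs_Cauchy Cauchy_convergent_iff by blast

lemma padic_cauchy_bounded:
  assumes "padic_cauchy p x"
  obtains B where "B > 0" "\<And>n. padic_abs p (x n) \<le> B"
proof -
  have "Bseq (\<lambda>n. padic_abs p (x n))"
    using padic_cauchy_abs_convergent[OF assms] convergent_imp_Bseq by blast
  thus ?thesis using that unfolding Bseq_def by auto
qed

lemma padic_cauchy_const [simp]: "padic_cauchy p (\<lambda>n. c)"
  unfolding padic_cauchy_def by simp

lemma padic_cauchy_add [simp]:
  assumes "padic_cauchy p x" "padic_cauchy p y"
  shows "padic_cauchy p (\<lambda>n. x n + y n)"
  unfolding padic_cauchy_def
proof (intro allI impI)
  fix \<epsilon> :: real assume "\<epsilon> > 0"
  then obtain N1 N2 where N1: "\<forall>m\<ge>N1. \<forall>n\<ge>N1. padic_abs p (x m - x n) < \<epsilon>"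
    and N2: "\<forall>m\<ge>N2. \<forall>n\<ge>N2. padic_abs p (y m - y n) < \<epsilon>"
    using assms unfolding padic_cauchy_def by meson
  have "padic_abs p (x m + y m - (x n + y n)) < \<epsilon>" if "max N1 N2 \<le> m" "max N1 N2 \<le> n" for m n
  proof -
    have "padic_abs p (x m - x n) < \<epsilon>" "padic_abs p (y m - y n) < \<epsilon>" using that N1 N2 by auto
    thus ?thesis using padic_abs_ultrametric[of "x m - x n" "y m - y n"] by (simp add: algebra_simps)
  qed
  thus "\<exists>N. \<forall>m\<ge>N. \<forall>n\<ge>N. padic_abs p (x m + y m - (x n + y n)) < \<epsilon>" by blast
qed

lemma padic_cauchy_minus [simp]:
  assumes "padic_cauchy p x"
  shows "padic_cauchy p (\<lambda>n. - x n)"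
  using assms padic_abs_commute unfolding padic_cauchy_def by (simp add: algebra_simps)

lemma padic_cauchy_diff [simp]:
  "padic_cauchy p x \<Longrightarrow> padic_cauchy p y \<Longrightarrow> padic_cauchy p (\<lambda>n. x n - y n)"
  using padic_cauchy_add[of x "\<lambda>n. - y n"] by simp

lemma padic_cauchy_mult [simp]:
  assumes x: "padic_cauchy p x" and y: "padic_cauchy p y"
  shows "padic_cauchy p (\<lambda>n. x n * y n)"
  unfolding padic_cauchy_def
proof (intro allI impI)
  fix \<epsilon> :: real assume \<epsilon>: "\<epsilon> > 0"
  obtain Bx where Bx: "Bx > 0" "\<And>n. padic_abs p (x n) \<le> Bx" using padic_cauchy_bounded[OF x] by blast
  obtain By where By: "By > 0" "\<And>n. padic_abs p (y n) \<le> By" using padic_cauchy_bounded[OF y] by blast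
  define \<delta> where "\<delta> = \<epsilon> / (Bx + By)"
  have \<delta>: "\<delta> > 0" "Bx * \<delta> < \<epsilon>" "\<delta> * By < \<epsilon>"
    using \<epsilon> Bx By by (auto simp: \<delta>_def field_simps)
  obtain N1 N2 where N1: "\<forall>m\<ge>N1. \<forall>n\<ge>N1. padic_abs p (x m - x n) < \<delta>"
    and N2: "\<forall>m\<ge>N2. \<forall>n\<ge>N2. padic_abs p (y m - y n) < \<delta>"
    using x y \<delta>(1) unfolding padic_cauchy_def by meson
  have "padic_abs p (x m * y m - x n * y n) < \<epsilon>" if "max N1 N2 \<le> m" "max N1 N2 \<le> n" for m n
  proof -
    have "padic_abs p (x m - x n) < \<delta>" "padic_abs p (y m - y n) < \<delta>" using that N1 N2 by auto
    hence "padic_abs p (x m * (y m - y n)) \<le> Bx * \<delta>" "padic_abs p ((x m - x n) * y n) \<le> \<delta> * By"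
      unfolding padic_abs_mult using Bx By \<delta> by (auto intro!: mult_mono)
    moreover have "x m * y m - x n * y n = x m * (y m - y n) + (x m - x n) * y n"
      by (simp add: algebra_simps)
    ultimately show ?thesis
      using padic_abs_ultrametric[of "x m * (y m - y n)" "(x m - x n) * y n"] \<delta> by simp
  qed
  thus "\<exists>N. \<forall>m\<ge>N. \<forall>n\<ge>N. padic_abs p (x m * y m - x n * y n) < \<epsilon>" by blast
qed

lemma padic_null_comparison:
  "(\<And>n. padic_abs p (f n) \<le> g n) \<Longrightarrow> g \<longlonglongrightarrow> 0 \<Longrightarrow> (\<lambda>n. padic_abs p (f n)) \<longlonglongrightarrow> 0"
  by (rule Lim_null_comparison[of _ g]) auto

lemma padic_equiv_sym: "padic_equiv p x y \<Longrightarrow> padic_equiv p y x"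
  unfolding padic_equiv_def using padic_abs_commute by simp

lemma padic_equiv_trans:
  assumes "padic_equiv p x y" "padic_equiv p y z"
  shows "padic_equiv p x z"
  unfolding padic_equiv_def
proof (rule padic_null_comparison)
  show "padic_abs p (x n - z n) \<le> padic_abs p (x n - y n) + padic_abs p (y n - z n)" for n
    using padic_abs_triangle[of "x n - y n" "y n - z n"] by simp
  show "(\<lambda>n. padic_abs p (x n - y n) + padic_abs p (y n - z n)) \<longlonglongrightarrow> 0"
    using tendsto_add[OF assms[unfolded padic_equiv_def]] by simp
qed

lemma padic_equiv_add:
  assumes "padic_equiv p x x'" "padic_equiv p y y'"
  shows "padic_equiv p (\<lambda>n. x n + y n) (\<lambda>n. x' n + y' n)"
  unfolding padic_equiv_def
proof (rule padic_null_comparison)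
  show "padic_abs p (x n + y n - (x' n + y' n)) \<le> padic_abs p (x n - x' n) + padic_abs p (y n - y' n)" for n
    using padic_abs_triangle[of "x n - x' n" "y n - y' n"] by (simp add: algebra_simps)
  show "(\<lambda>n. padic_abs p (x n - x' n) + padic_abs p (y n - y' n)) \<longlonglongrightarrow> 0"
    using tendsto_add[OF assms[unfolded padic_equiv_def]] by simp
qed

lemma padic_equiv_minus: "padic_equiv p x x' \<Longrightarrow> padic_equiv p (\<lambda>n. - x n) (\<lambda>n. - x' n)"
  unfolding padic_equiv_def using padic_abs_commute by (simp add: algebra_simps)

lemma padic_equiv_mult:
  assumes "padic_cauchy p x'" "padic_cauchy p y" "padic_equiv p x x'" "padic_equiv p y y'"
  shows "padic_equiv p (\<lambda>n. x n * y n) (\<lambda>n. x' n * y' n)"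
proof -
  obtain Bx where Bx: "\<And>n. padic_abs p (x' n) \<le> Bx" using padic_cauchy_bounded[OF assms(1)] by blast
  obtain By where By: "\<And>n. padic_abs p (y n) \<le> By" using padic_cauchy_bounded[OF assms(2)] by blast
  show ?thesis
    unfolding padic_equiv_def
  proof (rule padic_null_comparison)
    fix n
    have "x n * y n - x' n * y' n = (x n - x' n) * y n + x' n * (y n - y' n)"
      by (simp add: algebra_simps)
    hence "padic_abs p (x n * y n - x' n * y' n)
        \<le> padic_abs p (y n) * padic_abs p (x n - x' n) + padic_abs p (x' n) * padic_abs p (y n - y' n)"
      using padic_abs_triangle padic_abs_mult by (metis mult.commute)
    also have "\<dots> \<le> By * padic_abs p (x n - x' n) + Bx * padic_abs p (y n - y' n)"
      using Bx By by (intro add_mono mult_right_mono) simp_all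
    finally show "padic_abs p (x n * y n - x' n * y' n)
        \<le> By * padic_abs p (x n - x' n) + Bx * padic_abs p (y n - y' n)" .
  next
    show "(\<lambda>n. By * padic_abs p (x n - x' n) + Bx * padic_abs p (y n - y' n)) \<longlonglongrightarrow> 0"
      using tendsto_add[OF tendsto_mult_right_zero tendsto_mult_right_zero,
          OF assms(3,4)[unfolded padic_equiv_def]]
      by (simp add: mult.commute)
  qed
qed

lemma qp_class_self: "padic_cauchy p x \<Longrightarrow> x \<in> qp_class p x"
  unfolding qp_class_def padic_equiv_def by simp

lemma qp_class_eqI: "padic_equiv p x y \<Longrightarrow> qp_class p x = qp_class p y"
  unfolding qp_class_def using padic_equiv_sym padic_equiv_trans by blast

lemma qp_class_eq_iff:
  "padic_cauchy p x \<Longrightarrow> padic_cauchy p y \<Longrightarrow> qp_class p x = qp_class p y \<longleftrightarrow> padic_equiv p x y"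
  using qp_class_self[of y] qp_class_eqI unfolding qp_class_def by blast

lemma qp_rep_class:
  assumes "padic_cauchy p x"
  shows "padic_cauchy p (qp_rep (qp_class p x))" "padic_equiv p (qp_rep (qp_class p x)) x"
proof -
  have "qp_rep (qp_class p x) \<in> qp_class p x"
    unfolding qp_rep_def using qp_class_self[OF assms] by (rule someI[of "\<lambda>z. z \<in> qp_class p x"])
  thus "padic_cauchy p (qp_rep (qp_class p x))" "padic_equiv p (qp_rep (qp_class p x)) x"
    unfolding qp_class_def by (auto intro: padic_equiv_sym)
qed

lemma Qp_cases:
  assumes "A \<in> Qp p"
  obtains x where "padic_cauchy p x" "A = qp_class p x"
  using assms unfolding Qp_def by blast

lemma qp_class_in_Qp [simp]: "padic_cauchy p x \<Longrightarrow> qp_class p x \<in> Qp p"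
  unfolding Qp_def by blast

lemma qp_add_class:
  "padic_cauchy p x \<Longrightarrow> padic_cauchy p y \<Longrightarrow> qp_add p (qp_class p x) (qp_class p y) = qp_class p (\<lambda>n. x n + y n)"
  unfolding qp_add_def by (intro qp_class_eqI padic_equiv_add qp_rep_class)

lemma qp_sub_class:
  "padic_cauchy p x \<Longrightarrow> padic_cauchy p y \<Longrightarrow> qp_sub p (qp_class p x) (qp_class p y) = qp_class p (\<lambda>n. x n - y n)"
  using padic_equiv_add[OF _ padic_equiv_minus, of "qp_rep (qp_class p x)" x "qp_rep (qp_class p y)" y]
  unfolding qp_sub_def by (intro qp_class_eqI) (simp add: qp_rep_class)

lemma qp_mult_class:
  "padic_cauchy p x \<Longrightarrow> padic_cauchy p y \<Longrightarrow> qp_mult p (qp_class p x) (qp_class p y) = qp_class p (\<lambda>n. x n * y n)"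
  unfolding qp_mult_def by (intro qp_class_eqI padic_equiv_mult qp_rep_class)

lemma qp_norm_class:
  assumes "padic_cauchy p x"
  shows "(\<lambda>n. padic_abs p (x n)) \<longlonglongrightarrow> qp_norm p (qp_class p x)"
proof -
  let ?r = "qp_rep (qp_class p x)"
  obtain L where L: "(\<lambda>n. padic_abs p (?r n)) \<longlonglongrightarrow> L"
    using padic_cauchy_abs_convergent[OF qp_rep_class(1)[OF assms]] unfolding convergent_def by blast
  have "(\<lambda>n. padic_abs p (x n) - padic_abs p (?r n)) \<longlonglongrightarrow> 0"
    using qp_rep_class(2)[OF assms, THEN padic_equiv_sym, unfolded padic_equiv_def]
    by (rule Lim_null_comparison[rotated]) (simp add: padic_abs_diff_le)
  hence "(\<lambda>n. (padic_abs p (x n) - padic_abs p (?r n)) + padic_abs p (?r n)) \<longlonglongrightarrow> 0 + L"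
    using L by (rule tendsto_add)
  hence "(\<lambda>n. padic_abs p (x n)) \<longlonglongrightarrow> L" by simp
  moreover have "qp_norm p (qp_class p x) = L" unfolding qp_norm_def using L by (rule limI)
  ultimately show ?thesis by simp
qed

lemma padic_cauchy_nonnull_bounded_below:
  assumes "padic_cauchy p x" "\<not> padic_equiv p x (\<lambda>n. 0)"
  obtains \<delta> N where "\<delta> > 0" "\<And>n. n \<ge> N \<Longrightarrow> padic_abs p (x n) \<ge> \<delta>"
proof -
  obtain L where L: "(\<lambda>n. padic_abs p (x n)) \<longlonglongrightarrow> L"
    using padic_cauchy_abs_convergent[OF assms(1)] unfolding convergent_def by blast
  have "L \<ge> 0" by (rule LIMSEQ_le_const[OF L]) simp
  moreover have "L \<noteq> 0" using L assms(2) unfolding padic_equiv_def by auto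
  ultimately have "L / 2 > 0" "L / 2 < L" by simp_all
  moreover obtain N where "\<And>n. n \<ge> N \<Longrightarrow> L / 2 < padic_abs p (x n)"
    using order_tendstoD(1)[OF L \<open>L / 2 < L\<close>] unfolding eventually_sequentially by blast
  ultimately show ?thesis using that[of "L / 2" N] by (meson less_imp_le)
qed

lemma padic_cauchy_inverse:
  assumes "padic_cauchy p x" "\<not> padic_equiv p x (\<lambda>n. 0)"
  shows "padic_cauchy p (\<lambda>n. inverse (x n))" "padic_equiv p (\<lambda>n. x n * inverse (x n)) (\<lambda>n. 1)"
proof -
  obtain \<delta> N where \<delta>: "\<delta> > 0" "\<And>n. n \<ge> N \<Longrightarrow> padic_abs p (x n) \<ge> \<delta>"
    using padic_cauchy_nonnull_bounded_below[OF assms] by blast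
  have nz: "x n \<noteq> 0" if "n \<ge> N" for n
    using \<delta> that by force
  show "padic_cauchy p (\<lambda>n. inverse (x n))"
    unfolding padic_cauchy_def
  proof (intro allI impI)
    fix \<epsilon> :: real assume "\<epsilon> > 0"
    then obtain N1 where N1: "\<forall>m\<ge>N1. \<forall>n\<ge>N1. padic_abs p (x m - x n) < \<epsilon> * \<delta> * \<delta>"
      using assms(1) \<delta>(1) unfolding padic_cauchy_def by (metis mult_pos_pos)
    have "padic_abs p (inverse (x m) - inverse (x n)) < \<epsilon>" if mn: "max N N1 \<le> m" "max N N1 \<le> n" for m n
    proof -
      have eq: "inverse (x m) - inverse (x n) = (x n - x m) * inverse (x m) * inverse (x n)"
        using nz mn by (simp add: field_simps)
      have "padic_abs p (inverse (x m) - inverse (x n))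
          = padic_abs p (x n - x m) / (padic_abs p (x m) * padic_abs p (x n))"
        unfolding eq padic_abs_mult padic_abs_inverse by (simp add: field_simps)
      moreover have "\<delta> \<le> padic_abs p (x m)" "\<delta> \<le> padic_abs p (x n)" using \<delta>(2) mn by auto
      ultimately have "padic_abs p (inverse (x m) - inverse (x n)) \<le> padic_abs p (x n - x m) / (\<delta> * \<delta>)"
        using \<delta>(1) by (auto intro!: divide_left_mono mult_mono mult_pos_pos)
      also have "\<dots> < \<epsilon>" using N1 mn \<delta> by (simp add: field_simps)
      finally show ?thesis .
    qed
    thus "\<exists>M. \<forall>m\<ge>M. \<forall>n\<ge>M. padic_abs p (inverse (x m) - inverse (x n)) < \<epsilon>" by blast
  qed
  have "padic_abs p (x n * inverse (x n) - 1) = 0" if "n \<ge> N" for n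
    using nz[OF that] by simp
  hence "eventually (\<lambda>n. padic_abs p (x n * inverse (x n) - 1) = 0) sequentially"
    unfolding eventually_sequentially by blast
  thus "padic_equiv p (\<lambda>n. x n * inverse (x n)) (\<lambda>n. 1)"
    unfolding padic_equiv_def by (simp add: tendsto_eventually)
qed

lemmas qp_class_ops = qp_add_class qp_sub_class qp_mult_class qp_zero_def qp_one_def

lemma Qp_ring_field: "field (Qp_ring p)"
proof -
  have [simp]: "carrier (Qp_ring p) = Qp p" "monoid.mult (Qp_ring p) = qp_mult p"
    "one (Qp_ring p) = qp_one p" "zero (Qp_ring p) = qp_zero p" "add (Qp_ring p) = qp_add p"
    by (simp_all add: Qp_ring_def)
  have cring: "cring (Qp_ring p)"
  proof (rule cringI[OF abelian_groupI comm_monoidI])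
    fix x assume "x \<in> carrier (Qp_ring p)"
    then obtain u where u: "padic_cauchy p u" "x = qp_class p u" by (auto elim: Qp_cases)
    show "\<exists>y\<in>carrier (Qp_ring p). y \<oplus>\<^bsub>Qp_ring p\<^esub> x = \<zero>\<^bsub>Qp_ring p\<^esub>"
      using u by (intro bexI[of _ "qp_class p (\<lambda>n. - u n)"]) (simp_all add: qp_class_ops)
  qed (auto elim!: Qp_cases simp: qp_class_ops algebra_simps)
  show ?thesis
  proof (rule cring.cring_fieldI2[OF cring], simp_all)
    show "qp_zero p \<noteq> qp_one p"
    proof
      assume "qp_zero p = qp_one p"
      hence "padic_equiv p (\<lambda>n. 0) (\<lambda>n. 1)" by (simp add: qp_zero_def qp_one_def qp_class_eq_iff)
      thus False unfolding padic_equiv_def by (simp add: LIMSEQ_const_iff)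
    qed
  next
    fix a assume a: "a \<in> Qp p" "a \<noteq> qp_zero p"
    then obtain x where x: "padic_cauchy p x" "a = qp_class p x" by (elim Qp_cases)
    have "\<not> padic_equiv p x (\<lambda>n. 0)"
      using a(2) qp_class_eqI[of x "\<lambda>n. 0"] unfolding x(2) qp_zero_def by blast
    note inv = padic_cauchy_inverse[OF x(1) this]
    have "qp_mult p a (qp_class p (\<lambda>n. inverse (x n))) = qp_class p (\<lambda>n. x n * inverse (x n))"
      unfolding x(2) using x(1) inv(1) by (rule qp_mult_class)
    also have "\<dots> = qp_one p" unfolding qp_one_def using inv(2) by (rule qp_class_eqI)
    finally show "\<exists>b\<in>Qp p. qp_mult p a b = qp_one p" using qp_class_in_Qp[OF inv(1)] by blast
  qed
qed

abbreviation R where "R \<equiv> Qp_ring p"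

sublocale R: field R by (rule Qp_ring_field)

lemma Qp_ring_simps:
  "carrier R = Qp p" "x \<oplus>\<^bsub>R\<^esub> y = qp_add p x y" "x \<otimes>\<^bsub>R\<^esub> y = qp_mult p x y"
  "\<zero>\<^bsub>R\<^esub> = qp_zero p" "\<one>\<^bsub>R\<^esub> = qp_one p"
  by (simp_all add: Qp_ring_def)

lemma Qp_ring_cases:
  assumes "x \<in> carrier R"
  obtains u where "padic_cauchy p u" "x = qp_class p u"
  using assms Qp_cases unfolding Qp_ring_simps by blast

lemma Qp_ring_minus_class: "padic_cauchy p u \<Longrightarrow> \<ominus>\<^bsub>R\<^esub> qp_class p u = qp_class p (\<lambda>n. - u n)"
  by (rule R.minus_equality) (simp_all add: Qp_ring_simps qp_class_ops)

lemma qp_sub_eq: "x \<in> carrier R \<Longrightarrow> y \<in> carrier R \<Longrightarrow> qp_sub p x y = x \<ominus>\<^bsub>R\<^esub> y"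
  by (elim Qp_ring_cases)
    (simp add: a_minus_def Qp_ring_minus_class Qp_ring_simps qp_class_ops)

lemma qp_norm_nonneg [simp]: "x \<in> carrier R \<Longrightarrow> qp_norm p x \<ge> 0"
  by (elim Qp_ring_cases) (simp add: LIMSEQ_le_const[OF qp_norm_class])

lemma qp_norm_mult:
  "x \<in> carrier R \<Longrightarrow> y \<in> carrier R \<Longrightarrow> qp_norm p (x \<otimes>\<^bsub>R\<^esub> y) = qp_norm p x * qp_norm p y"
proof (elim Qp_ring_cases)
  fix u v assume uv: "padic_cauchy p u" "x = qp_class p u" "padic_cauchy p v" "y = qp_class p v"
  have "(\<lambda>n. padic_abs p (u n * v n)) \<longlonglongrightarrow> qp_norm p x * qp_norm p y"
    unfolding padic_abs_mult uv by (intro tendsto_mult qp_norm_class uv)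
  moreover have "(\<lambda>n. padic_abs p (u n * v n)) \<longlonglongrightarrow> qp_norm p (x \<otimes>\<^bsub>R\<^esub> y)"
    using qp_norm_class[of "\<lambda>n. u n * v n"] uv by (simp add: Qp_ring_simps qp_class_ops)
  ultimately show ?thesis using LIMSEQ_unique by blast
qed

lemma qp_norm_add_le:
  "x \<in> carrier R \<Longrightarrow> y \<in> carrier R \<Longrightarrow> qp_norm p (x \<oplus>\<^bsub>R\<^esub> y) \<le> max (qp_norm p x) (qp_norm p y)"
proof (elim Qp_ring_cases)
  fix u v assume uv: "padic_cauchy p u" "x = qp_class p u" "padic_cauchy p v" "y = qp_class p v"
  have max: "(\<lambda>n. max (padic_abs p (u n)) (padic_abs p (v n))) \<longlonglongrightarrow> max (qp_norm p x) (qp_norm p y)"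
    unfolding uv by (intro tendsto_max qp_norm_class uv)
  have sum: "(\<lambda>n. padic_abs p (u n + v n)) \<longlonglongrightarrow> qp_norm p (x \<oplus>\<^bsub>R\<^esub> y)"
    using qp_norm_class[of "\<lambda>n. u n + v n"] uv by (simp add: Qp_ring_simps qp_class_ops)
  show ?thesis by (rule LIMSEQ_le[OF sum max]) (simp add: padic_abs_ultrametric)
qed

lemma qp_norm_minus [simp]: "x \<in> carrier R \<Longrightarrow> qp_norm p (\<ominus>\<^bsub>R\<^esub> x) = qp_norm p x"
proof (elim Qp_ring_cases)
  fix u assume u: "padic_cauchy p u" "x = qp_class p u"
  have "(\<lambda>n. padic_abs p (- u n)) \<longlonglongrightarrow> qp_norm p (\<ominus>\<^bsub>R\<^esub> x)"
    using qp_norm_class[of "\<lambda>n. - u n"] u by (simp add: Qp_ring_minus_class)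
  moreover have "(\<lambda>n. padic_abs p (- u n)) \<longlonglongrightarrow> qp_norm p x"
    using qp_norm_class[of u] u by simp
  ultimately show ?thesis using LIMSEQ_unique by blast
qed

lemma qp_norm_eq_0_iff [simp]: "x \<in> carrier R \<Longrightarrow> qp_norm p x = 0 \<longleftrightarrow> x = \<zero>\<^bsub>R\<^esub>"
proof (elim Qp_ring_cases)
  fix u assume u: "padic_cauchy p u" "x = qp_class p u"
  have "qp_norm p x = 0 \<longleftrightarrow> (\<lambda>n. padic_abs p (u n)) \<longlonglongrightarrow> 0"
    using qp_norm_class[OF u(1)] u(2) LIMSEQ_unique by auto
  also have "\<dots> \<longleftrightarrow> x = \<zero>\<^bsub>R\<^esub>"
    using u qp_class_eq_iff[of u "\<lambda>n. 0"] by (simp add: Qp_ring_simps qp_zero_def padic_equiv_def)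
  finally show ?thesis .
qed

lemma qp_norm_zero [simp]: "qp_norm p \<zero>\<^bsub>R\<^esub> = 0"
  by simp

lemma qp_norm_one [simp]: "qp_norm p \<one>\<^bsub>R\<^esub> = 1"
  using qp_norm_class[of "\<lambda>n. 1"] by (simp add: Qp_ring_simps qp_one_def LIMSEQ_const_iff)

lemma qp_norm_inv:
  assumes "x \<in> carrier R" "x \<noteq> \<zero>\<^bsub>R\<^esub>"
  shows "qp_norm p (inv\<^bsub>R\<^esub> x) * qp_norm p x = 1"
proof -
  have "x \<in> Units R" using assms R.field_Units by simp
  thus ?thesis using qp_norm_mult[of "inv\<^bsub>R\<^esub> x" x] assms by simp
qed

lemma Qp_ring_ops [simp]:
  "Qp p = carrier R" "qp_add p = add R" "qp_mult p = monoid.mult R" "qp_zero p = zero R" "qp_one p = one R"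
  by (simp_all add: Qp_ring_def)

declare qp_sub_eq [simp]

lemma Zp_iff: "x \<in> Zp p \<longleftrightarrow> x \<in> carrier R \<and> qp_norm p x \<le> 1"
  unfolding Zp_def by simp

lemma Zp_carrier: "x \<in> Zp p \<Longrightarrow> x \<in> carrier R"
  unfolding Zp_iff by simp

lemma Zp_zero [simp]: "\<zero>\<^bsub>R\<^esub> \<in> Zp p"
  unfolding Zp_iff by simp

lemma Zp_one [simp]: "\<one>\<^bsub>R\<^esub> \<in> Zp p"
  unfolding Zp_iff by simp

lemma Zp_add: "x \<in> Zp p \<Longrightarrow> y \<in> Zp p \<Longrightarrow> x \<oplus>\<^bsub>R\<^esub> y \<in> Zp p"
  unfolding Zp_iff using qp_norm_add_le[of x y] by auto

lemma Zp_mult: "x \<in> Zp p \<Longrightarrow> y \<in> Zp p \<Longrightarrow> x \<otimes>\<^bsub>R\<^esub> y \<in> Zp p"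
  unfolding Zp_iff using qp_norm_mult[of x y] by (auto intro: mult_le_one)

lemma Zp_minus: "x \<in> Zp p \<Longrightarrow> \<ominus>\<^bsub>R\<^esub> x \<in> Zp p"
  unfolding Zp_iff by auto

lemma Zp_diff: "x \<in> Zp p \<Longrightarrow> y \<in> Zp p \<Longrightarrow> x \<ominus>\<^bsub>R\<^esub> y \<in> Zp p"
  by (simp add: a_minus_def Zp_add Zp_minus)

lemma Zp_finsum: "finite A \<Longrightarrow> (\<And>a. a \<in> A \<Longrightarrow> f a \<in> Zp p) \<Longrightarrow> finsum R f A \<in> Zp p"
proof (induction A rule: finite_induct)
  case (insert a A)
  hence "f \<in> insert a A \<rightarrow> carrier R" using Zp_carrier by blast
  thus ?case using insert Zp_add by (simp add: R.finsum_insert)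
qed simp

lemma finsum_swap:
  assumes "finite A" "finite B" "\<And>a b. a \<in> A \<Longrightarrow> b \<in> B \<Longrightarrow> f a b \<in> carrier R"
  shows "finsum R (\<lambda>a. finsum R (\<lambda>b. f a b) B) A = finsum R (\<lambda>b. finsum R (\<lambda>a. f a b) A) B"
  using assms(1,3)
proof (induction A rule: finite_induct)
  case (insert x A)
  have "finsum R (\<lambda>a. finsum R (\<lambda>b. f a b) B) (insert x A) =
        finsum R (\<lambda>b. f x b) B \<oplus>\<^bsub>R\<^esub> finsum R (\<lambda>b. finsum R (\<lambda>a. f a b) A) B"
    using insert by (subst R.finsum_insert) (auto intro!: R.finsum_closed)
  also have "\<dots> = finsum R (\<lambda>b. f x b \<oplus>\<^bsub>R\<^esub> finsum R (\<lambda>a. f a b) A) B"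
    using insert by (intro R.finsum_addf[symmetric]) (auto intro!: R.finsum_closed)
  also have "\<dots> = finsum R (\<lambda>b. finsum R (\<lambda>a. f a b) (insert x A)) B"
    using insert by (intro R.finsum_cong') (auto simp: R.finsum_insert)
  finally show ?case .
qed (simp add: R.finsum_zero)

lemma finsum_mult_delta:
  assumes "finite A" "l \<in> A" "\<And>k. k \<in> A \<Longrightarrow> c k \<in> carrier R"
  shows "finsum R (\<lambda>k. c k \<otimes>\<^bsub>R\<^esub> (if k = l then \<one>\<^bsub>R\<^esub> else \<zero>\<^bsub>R\<^esub>)) A = c l"
proof -
  have "finsum R (\<lambda>k. c k \<otimes>\<^bsub>R\<^esub> (if k = l then \<one>\<^bsub>R\<^esub> else \<zero>\<^bsub>R\<^esub>)) A
      = finsum R (\<lambda>k. if l = k then c k else \<zero>\<^bsub>R\<^esub>) A"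
    using assms by (intro R.finsum_cong') auto
  also have "\<dots> = c l" using assms by (intro R.finsum_singleton) auto
  finally show ?thesis .
qed

lemma finsum_minus:
  "finite A \<Longrightarrow> (\<And>a. a \<in> A \<Longrightarrow> f a \<in> carrier R) \<Longrightarrow>
   finsum R (\<lambda>a. \<ominus>\<^bsub>R\<^esub> f a) A = \<ominus>\<^bsub>R\<^esub> finsum R f A"
proof (induction A rule: finite_induct)
  case (insert a A)
  hence f: "f \<in> insert a A \<rightarrow> carrier R" by blast
  have "finsum R (\<lambda>a. \<ominus>\<^bsub>R\<^esub> f a) (insert a A) = \<ominus>\<^bsub>R\<^esub> f a \<oplus>\<^bsub>R\<^esub> \<ominus>\<^bsub>R\<^esub> finsum R f A"
    using insert f by (subst R.finsum_insert) auto
  also have "\<dots> = \<ominus>\<^bsub>R\<^esub> finsum R f (insert a A)"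
    using insert f by (simp add: R.finsum_insert R.minus_add)
  finally show ?case .
qed simp

lemma finsum_diff:
  "finite A \<Longrightarrow> (\<And>a. a \<in> A \<Longrightarrow> f a \<in> carrier R) \<Longrightarrow> (\<And>a. a \<in> A \<Longrightarrow> g a \<in> carrier R) \<Longrightarrow>
   finsum R (\<lambda>a. f a \<ominus>\<^bsub>R\<^esub> g a) A = finsum R f A \<ominus>\<^bsub>R\<^esub> finsum R g A"
  unfolding a_minus_def by (simp add: R.finsum_addf finsum_minus Pi_def)

lemma finsum_linear_combination_swap:
  assumes "finite I" "finite K" "\<And>k. k \<in> K \<Longrightarrow> a k \<in> carrier R"
    "\<And>k i. k \<in> K \<Longrightarrow> i \<in> I \<Longrightarrow> W k i \<in> carrier R" "\<And>i. i \<in> I \<Longrightarrow> c i \<in> carrier R"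
  shows "finsum R (\<lambda>i. finsum R (\<lambda>k. a k \<otimes>\<^bsub>R\<^esub> W k i) K \<otimes>\<^bsub>R\<^esub> c i) I =
         finsum R (\<lambda>k. a k \<otimes>\<^bsub>R\<^esub> finsum R (\<lambda>i. W k i \<otimes>\<^bsub>R\<^esub> c i) I) K"
proof -
  have "finsum R (\<lambda>i. finsum R (\<lambda>k. a k \<otimes>\<^bsub>R\<^esub> W k i) K \<otimes>\<^bsub>R\<^esub> c i) I =
        finsum R (\<lambda>i. finsum R (\<lambda>k. a k \<otimes>\<^bsub>R\<^esub> (W k i \<otimes>\<^bsub>R\<^esub> c i)) K) I"
  proof (rule R.finsum_cong')
    fix i assume i: "i \<in> I"
    have "finsum R (\<lambda>k. a k \<otimes>\<^bsub>R\<^esub> W k i) K \<otimes>\<^bsub>R\<^esub> c i = finsum R (\<lambda>k. a k \<otimes>\<^bsub>R\<^esub> W k i \<otimes>\<^bsub>R\<^esub> c i) K"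
      using assms i by (intro R.finsum_ldistr) auto
    also have "\<dots> = finsum R (\<lambda>k. a k \<otimes>\<^bsub>R\<^esub> (W k i \<otimes>\<^bsub>R\<^esub> c i)) K"
      using assms i by (intro R.finsum_cong') (auto simp: R.m_assoc)
    finally show "finsum R (\<lambda>k. a k \<otimes>\<^bsub>R\<^esub> W k i) K \<otimes>\<^bsub>R\<^esub> c i = finsum R (\<lambda>k. a k \<otimes>\<^bsub>R\<^esub> (W k i \<otimes>\<^bsub>R\<^esub> c i)) K" .
  qed (use assms in \<open>auto intro!: R.finsum_closed\<close>)
  also have "\<dots> = finsum R (\<lambda>k. finsum R (\<lambda>i. a k \<otimes>\<^bsub>R\<^esub> (W k i \<otimes>\<^bsub>R\<^esub> c i)) I) K"
    using assms by (intro finsum_swap) auto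
  also have "\<dots> = finsum R (\<lambda>k. a k \<otimes>\<^bsub>R\<^esub> finsum R (\<lambda>i. W k i \<otimes>\<^bsub>R\<^esub> c i) I) K"
    using assms by (intro R.finsum_cong') (auto simp: R.finsum_rdistr)
  finally show ?thesis .
qed

lemma foldr_add_eq_finsum:
  "distinct xs \<Longrightarrow> (\<And>i. i \<in> set xs \<Longrightarrow> f i \<in> carrier R) \<Longrightarrow>
   foldr (add R) (map f xs) \<zero>\<^bsub>R\<^esub> = finsum R f (set xs)"
  by (induction xs) (simp_all add: R.finsum_insert Pi_def)

section \<open>The topology of \<open>\<rat>\<^sub>p\<close>\<close>

definition qp_dist :: "qp \<Rightarrow> qp \<Rightarrow> real" where
  "qp_dist x y = (if x \<in> carrier R \<and> y \<in> carrier R then qp_norm p (y \<ominus>\<^bsub>R\<^esub> x) else 0)"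

lemma qp_diff_eq_zero_iff: "x \<in> carrier R \<Longrightarrow> y \<in> carrier R \<Longrightarrow> x \<ominus>\<^bsub>R\<^esub> y = \<zero>\<^bsub>R\<^esub> \<longleftrightarrow> x = y"
  by (metis R.add.inv_closed R.minus_equality R.r_neg a_minus_def)

sublocale qp_metric: Metric_space "carrier R" qp_dist
proof
  fix x y z
  show "0 \<le> qp_dist x y" by (simp add: qp_dist_def)
  show "qp_dist x y = qp_dist y x"
  proof (cases "x \<in> carrier R \<and> y \<in> carrier R")
    case True
    hence "x \<ominus>\<^bsub>R\<^esub> y = \<ominus>\<^bsub>R\<^esub> (y \<ominus>\<^bsub>R\<^esub> x)"
      by (simp add: a_minus_def R.minus_add R.a_comm)
    thus ?thesis using True by (simp add: qp_dist_def)
  qed (auto simp: qp_dist_def)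
  assume x: "x \<in> carrier R" and y: "y \<in> carrier R"
  thus "qp_dist x y = 0 \<longleftrightarrow> x = y" by (auto simp: qp_dist_def qp_diff_eq_zero_iff)
  assume z: "z \<in> carrier R"
  have "z \<ominus>\<^bsub>R\<^esub> x = (z \<ominus>\<^bsub>R\<^esub> y) \<oplus>\<^bsub>R\<^esub> (y \<ominus>\<^bsub>R\<^esub> x)"
    using x y z by algebra
  hence "qp_norm p (z \<ominus>\<^bsub>R\<^esub> x) \<le> max (qp_norm p (z \<ominus>\<^bsub>R\<^esub> y)) (qp_norm p (y \<ominus>\<^bsub>R\<^esub> x))"
    using qp_norm_add_le[of "z \<ominus>\<^bsub>R\<^esub> y" "y \<ominus>\<^bsub>R\<^esub> x"] x y z by simp
  also have "\<dots> \<le> qp_norm p (z \<ominus>\<^bsub>R\<^esub> y) + qp_norm p (y \<ominus>\<^bsub>R\<^esub> x)"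
    using x y z by (intro max.boundedI) simp_all
  finally show "qp_dist x z \<le> qp_dist x y + qp_dist y z"
    using x y z by (simp add: qp_dist_def)
qed

lemma qp_dist_eq: "x \<in> carrier R \<Longrightarrow> y \<in> carrier R \<Longrightarrow> qp_dist x y = qp_norm p (y \<ominus>\<^bsub>R\<^esub> x)"
  by (simp add: qp_dist_def)

lemma qp_mball_subset_iff:
  "x \<in> carrier R \<Longrightarrow> qp_metric.mball x r \<subseteq> S \<longleftrightarrow> (\<forall>y\<in>carrier R. qp_norm p (y \<ominus>\<^bsub>R\<^esub> x) < r \<longrightarrow> y \<in> S)"
  by (auto simp: subset_iff qp_dist_eq)

lemma qp_top_eq_mtopology: "qp_top p = qp_metric.mtopology"
proof -
  have "S \<subseteq> carrier R \<and> (\<forall>x\<in>S. \<exists>r>0. \<forall>y\<in>carrier R. qp_norm p (qp_sub p y x) < r \<longrightarrow> y \<in> S)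
    \<longleftrightarrow> qp_metric.mopen S" for S
  proof (cases "S \<subseteq> carrier R")
    case True
    have "(\<exists>r>0. \<forall>y\<in>carrier R. qp_norm p (qp_sub p y x) < r \<longrightarrow> y \<in> S)
      \<longleftrightarrow> (\<exists>r>0. qp_metric.mball x r \<subseteq> S)" if "x \<in> S" for x
      using that True qp_mball_subset_iff[of x _ S] by (simp add: subset_iff)
    thus ?thesis unfolding qp_metric.mopen_def using True by blast
  qed (simp add: qp_metric.mopen_def)
  hence "(\<lambda>S. S \<subseteq> Qp p \<and> (\<forall>x\<in>S. \<exists>r>0. \<forall>y\<in>Qp p. qp_norm p (qp_sub p y x) < r \<longrightarrow> y \<in> S))
      = qp_metric.mopen"
    by auto
  thus ?thesis unfolding qp_top_def qp_metric.mtopology_def by simp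
qed

lemma topspace_qp_top [simp]: "topspace (qp_top p) = carrier R"
  by (simp add: qp_top_eq_mtopology)

lemma continuous_map_qp_top_iff:
  "continuous_map X (qp_top p) f \<longleftrightarrow>
    (\<forall>x\<in>topspace X. \<forall>\<epsilon>>0. \<exists>U. openin X U \<and> x \<in> U \<and>
       (\<forall>y\<in>U. f x \<in> carrier R \<and> f y \<in> carrier R \<and> qp_norm p (f y \<ominus>\<^bsub>R\<^esub> f x) < \<epsilon>))"
  unfolding qp_top_eq_mtopology qp_metric.continuous_map_to_metric qp_metric.in_mball
  by (simp add: qp_dist_eq cong: conj_cong)

lemma continuous_map_qp_const: "c \<in> carrier R \<Longrightarrow> continuous_map X (qp_top p) (\<lambda>x. c)"
  unfolding continuous_map_qp_top_iff by (auto simp: a_minus_def R.r_neg intro!: exI[of _ "topspace X"])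

lemma continuous_map_qp_mult_const:
  assumes f: "continuous_map X (qp_top p) f" and c: "c \<in> carrier R"
  shows "continuous_map X (qp_top p) (\<lambda>x. c \<otimes>\<^bsub>R\<^esub> f x)"
  unfolding continuous_map_qp_top_iff
proof (intro ballI allI impI)
  fix x and \<epsilon> :: real assume x: "x \<in> topspace X" and "\<epsilon> > 0"
  hence "\<epsilon> / (qp_norm p c + 1) > 0" using c by (simp add: add_nonneg_pos)
  then obtain U where U: "openin X U" "x \<in> U"
    "\<forall>y\<in>U. f x \<in> carrier R \<and> f y \<in> carrier R \<and> qp_norm p (f y \<ominus>\<^bsub>R\<^esub> f x) < \<epsilon> / (qp_norm p c + 1)"
    using f[unfolded continuous_map_qp_top_iff, rule_format, OF x] by blast
  have "qp_norm p (c \<otimes>\<^bsub>R\<^esub> f y \<ominus>\<^bsub>R\<^esub> c \<otimes>\<^bsub>R\<^esub> f x) < \<epsilon>" if y: "y \<in> U" for y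
  proof -
    have fxy: "f x \<in> carrier R" "f y \<in> carrier R" using U(3) y by auto
    hence "c \<otimes>\<^bsub>R\<^esub> f y \<ominus>\<^bsub>R\<^esub> c \<otimes>\<^bsub>R\<^esub> f x = c \<otimes>\<^bsub>R\<^esub> (f y \<ominus>\<^bsub>R\<^esub> f x)"
      using c by algebra
    hence "qp_norm p (c \<otimes>\<^bsub>R\<^esub> f y \<ominus>\<^bsub>R\<^esub> c \<otimes>\<^bsub>R\<^esub> f x) = qp_norm p c * qp_norm p (f y \<ominus>\<^bsub>R\<^esub> f x)"
      using fxy c by (simp add: qp_norm_mult)
    also have "\<dots> \<le> (qp_norm p c + 1) * qp_norm p (f y \<ominus>\<^bsub>R\<^esub> f x)"
      using U(3) y c by (intro mult_right_mono) auto
    also have "\<dots> < \<epsilon>"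
      using U(3) y c by (simp add: pos_less_divide_eq mult.commute add_nonneg_pos)
    finally show ?thesis .
  qed
  thus "\<exists>U. openin X U \<and> x \<in> U \<and> (\<forall>y\<in>U. c \<otimes>\<^bsub>R\<^esub> f x \<in> carrier R \<and> c \<otimes>\<^bsub>R\<^esub> f y \<in> carrier R \<and>
          qp_norm p (c \<otimes>\<^bsub>R\<^esub> f y \<ominus>\<^bsub>R\<^esub> c \<otimes>\<^bsub>R\<^esub> f x) < \<epsilon>)"
    using U c by auto
qed

lemma continuous_map_qp_add:
  assumes f: "continuous_map X (qp_top p) f" and g: "continuous_map X (qp_top p) g"
  shows "continuous_map X (qp_top p) (\<lambda>x. f x \<oplus>\<^bsub>R\<^esub> g x)"
  unfolding continuous_map_qp_top_iff
proof (intro ballI allI impI)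
  fix x and \<epsilon> :: real assume x: "x \<in> topspace X" and "\<epsilon> > 0"
  obtain U V where U: "openin X U" "x \<in> U"
      "\<forall>y\<in>U. f x \<in> carrier R \<and> f y \<in> carrier R \<and> qp_norm p (f y \<ominus>\<^bsub>R\<^esub> f x) < \<epsilon>"
    and V: "openin X V" "x \<in> V"
      "\<forall>y\<in>V. g x \<in> carrier R \<and> g y \<in> carrier R \<and> qp_norm p (g y \<ominus>\<^bsub>R\<^esub> g x) < \<epsilon>"
    using f[unfolded continuous_map_qp_top_iff, rule_format, OF x \<open>\<epsilon> > 0\<close>]
      g[unfolded continuous_map_qp_top_iff, rule_format, OF x \<open>\<epsilon> > 0\<close>] by blast
  have "qp_norm p (f y \<oplus>\<^bsub>R\<^esub> g y \<ominus>\<^bsub>R\<^esub> (f x \<oplus>\<^bsub>R\<^esub> g x)) < \<epsilon>" if y: "y \<in> U \<inter> V" for y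
  proof -
    have c: "f x \<in> carrier R" "f y \<in> carrier R" "g x \<in> carrier R" "g y \<in> carrier R"
      using U(3) V(3) y by auto
    hence "f y \<oplus>\<^bsub>R\<^esub> g y \<ominus>\<^bsub>R\<^esub> (f x \<oplus>\<^bsub>R\<^esub> g x) = (f y \<ominus>\<^bsub>R\<^esub> f x) \<oplus>\<^bsub>R\<^esub> (g y \<ominus>\<^bsub>R\<^esub> g x)"
      by algebra
    hence "qp_norm p (f y \<oplus>\<^bsub>R\<^esub> g y \<ominus>\<^bsub>R\<^esub> (f x \<oplus>\<^bsub>R\<^esub> g x))
        \<le> max (qp_norm p (f y \<ominus>\<^bsub>R\<^esub> f x)) (qp_norm p (g y \<ominus>\<^bsub>R\<^esub> g x))"
      using qp_norm_add_le c by simp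
    also have "\<dots> < \<epsilon>" using U(3) V(3) y by simp
    finally show ?thesis .
  qed
  thus "\<exists>W. openin X W \<and> x \<in> W \<and> (\<forall>y\<in>W. f x \<oplus>\<^bsub>R\<^esub> g x \<in> carrier R \<and> f y \<oplus>\<^bsub>R\<^esub> g y \<in> carrier R \<and>
          qp_norm p (f y \<oplus>\<^bsub>R\<^esub> g y \<ominus>\<^bsub>R\<^esub> (f x \<oplus>\<^bsub>R\<^esub> g x)) < \<epsilon>)"
    using U V by (intro exI[of _ "U \<inter> V"]) auto
qed

lemma continuous_map_qp_diff:
  assumes f: "continuous_map X (qp_top p) f" and g: "continuous_map X (qp_top p) g"
  shows "continuous_map X (qp_top p) (\<lambda>x. f x \<ominus>\<^bsub>R\<^esub> g x)"
proof (rule continuous_map_eq)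
  show "continuous_map X (qp_top p) (\<lambda>x. f x \<oplus>\<^bsub>R\<^esub> (\<ominus>\<^bsub>R\<^esub> \<one>\<^bsub>R\<^esub>) \<otimes>\<^bsub>R\<^esub> g x)"
    by (intro continuous_map_qp_add continuous_map_qp_mult_const f g) simp
  fix x assume "x \<in> topspace X"
  thus "f x \<oplus>\<^bsub>R\<^esub> (\<ominus>\<^bsub>R\<^esub> \<one>\<^bsub>R\<^esub>) \<otimes>\<^bsub>R\<^esub> g x = f x \<ominus>\<^bsub>R\<^esub> g x"
    using continuous_map_image_subset_topspace[OF g] by (auto simp: R.l_minus a_minus_def)
qed

lemma continuous_map_qp_finsum:
  assumes "finite K" "\<And>k. k \<in> K \<Longrightarrow> continuous_map X (qp_top p) (g k)"
  shows "continuous_map X (qp_top p) (\<lambda>x. finsum R (\<lambda>k. g k x) K)"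
  using assms
proof (induction K rule: finite_induct)
  case (insert a K)
  have "continuous_map X (qp_top p) (\<lambda>x. g a x \<oplus>\<^bsub>R\<^esub> finsum R (\<lambda>k. g k x) K)"
    using insert by (intro continuous_map_qp_add) auto
  moreover have "g a x \<oplus>\<^bsub>R\<^esub> finsum R (\<lambda>k. g k x) K = finsum R (\<lambda>k. g k x) (insert a K)"
    if "x \<in> topspace X" for x
  proof -
    have "g k x \<in> carrier R" if "k \<in> insert a K" for k
      using continuous_map_image_subset_topspace[OF insert.prems[OF that]] \<open>x \<in> topspace X\<close> by auto
    thus ?thesis using insert.hyps by (intro R.finsum_insert[symmetric]) auto
  qed
  ultimately show ?case by (rule continuous_map_eq) simp
qed (simp add: continuous_map_qp_const)

lemma openin_qp_norm_gt_1: "openin (qp_top p) {y \<in> carrier R. qp_norm p y > 1}"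
  unfolding qp_top_eq_mtopology qp_metric.openin_mtopology
proof (intro conjI allI impI exI[of _ 1])
  fix x assume x: "x \<in> {y \<in> carrier R. qp_norm p y > 1}"
  show "qp_metric.mball x 1 \<subseteq> {y \<in> carrier R. qp_norm p y > 1}"
  proof
    fix y assume "y \<in> qp_metric.mball x 1"
    hence y: "y \<in> carrier R" "qp_norm p (y \<ominus>\<^bsub>R\<^esub> x) < 1" using x by (auto simp: qp_dist_def)
    have "x \<in> carrier R" using x by simp
    hence "x = \<ominus>\<^bsub>R\<^esub> (y \<ominus>\<^bsub>R\<^esub> x) \<oplus>\<^bsub>R\<^esub> y" using y(1) by algebra
    hence "qp_norm p x \<le> max (qp_norm p (y \<ominus>\<^bsub>R\<^esub> x)) (qp_norm p y)"
      using qp_norm_add_le[of "\<ominus>\<^bsub>R\<^esub> (y \<ominus>\<^bsub>R\<^esub> x)" y] x y by simp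
    thus "y \<in> {y \<in> carrier R. qp_norm p y > 1}" using x y by auto
  qed
qed auto

section \<open>The space \<open>\<rat>\<^sub>p(\<nat>)\<close> and its topology \<open>\<tau>\<close>\<close>

lemma QpN_iff: "\<xi> \<in> QpN p \<longleftrightarrow> (\<forall>i. \<xi> i \<in> carrier R) \<and> finite {i. qp_norm p (\<xi> i) > 1}"
  unfolding QpN_def by simp

lemma QpN_carrier: "\<xi> \<in> QpN p \<Longrightarrow> \<xi> i \<in> carrier R"
  unfolding QpN_iff by simp

lemma finite_support_in_QpN:
  assumes "\<And>i. \<xi> i \<in> carrier R" "\<And>i. i > N \<Longrightarrow> \<xi> i = \<zero>\<^bsub>R\<^esub>"
  shows "\<xi> \<in> QpN p"
proof -
  have "{i. qp_norm p (\<xi> i) > 1} \<subseteq> {..N}" using assms(2) by (force simp: not_le[symmetric])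
  thus ?thesis unfolding QpN_iff using assms(1) finite_subset by blast
qed

lemma Zp_valued_in_QpN: "(\<And>i. \<xi> i \<in> Zp p) \<Longrightarrow> \<xi> \<in> QpN p"
  unfolding QpN_iff Zp_iff by (simp add: not_less[symmetric])

lemma QpN_add: "\<xi> \<in> QpN p \<Longrightarrow> \<eta> \<in> QpN p \<Longrightarrow> (\<lambda>i. \<xi> i \<oplus>\<^bsub>R\<^esub> \<eta> i) \<in> QpN p"
proof -
  assume \<xi>: "\<xi> \<in> QpN p" and \<eta>: "\<eta> \<in> QpN p"
  have "{i. qp_norm p (\<xi> i \<oplus>\<^bsub>R\<^esub> \<eta> i) > 1} \<subseteq> {i. qp_norm p (\<xi> i) > 1} \<union> {i. qp_norm p (\<eta> i) > 1}"
  proof (intro subsetI, simp)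
    fix i assume "1 < qp_norm p (\<xi> i \<oplus>\<^bsub>R\<^esub> \<eta> i)"
    hence "1 < max (qp_norm p (\<xi> i)) (qp_norm p (\<eta> i))"
      using qp_norm_add_le[OF QpN_carrier[OF \<xi>] QpN_carrier[OF \<eta>], of i i] by linarith
    thus "1 < qp_norm p (\<xi> i) \<or> 1 < qp_norm p (\<eta> i)" by (simp add: less_max_iff_disj)
  qed
  thus ?thesis using \<xi> \<eta> unfolding QpN_iff by (auto intro: finite_subset)
qed

lemma QpN_smult: "a \<in> Zp p \<Longrightarrow> \<xi> \<in> QpN p \<Longrightarrow> (\<lambda>i. a \<otimes>\<^bsub>R\<^esub> \<xi> i) \<in> QpN p"
proof -
  assume a: "a \<in> Zp p" and \<xi>: "\<xi> \<in> QpN p"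
  have "qp_norm p (a \<otimes>\<^bsub>R\<^esub> \<xi> i) \<le> qp_norm p (\<xi> i)" for i
    using a \<xi> by (simp add: Zp_iff QpN_iff qp_norm_mult mult_left_le_one_le)
  hence "{i. qp_norm p (a \<otimes>\<^bsub>R\<^esub> \<xi> i) > 1} \<subseteq> {i. qp_norm p (\<xi> i) > 1}" by (auto intro: less_le_trans)
  thus ?thesis using a \<xi> unfolding QpN_iff Zp_iff by (auto intro: finite_subset)
qed

lemma QpN_diff: "\<xi> \<in> QpN p \<Longrightarrow> \<eta> \<in> QpN p \<Longrightarrow> (\<lambda>i. \<xi> i \<ominus>\<^bsub>R\<^esub> \<eta> i) \<in> QpN p"
  using QpN_add[OF _ QpN_smult[of "\<ominus>\<^bsub>R\<^esub> \<one>\<^bsub>R\<^esub>" \<eta>]] Zp_minus[OF Zp_one]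
  by (simp add: a_minus_def R.l_minus QpN_carrier)

lemma seq_add_eq: "seq_add p \<xi> \<eta> = (\<lambda>i. \<xi> i \<oplus>\<^bsub>R\<^esub> \<eta> i)"
  unfolding seq_add_def by simp

lemma seq_smult_eq: "seq_smult p a \<xi> = (\<lambda>i. a \<otimes>\<^bsub>R\<^esub> \<xi> i)"
  unfolding seq_smult_def by simp

lemma seq_sub_eq: "\<xi> \<in> QpN p \<Longrightarrow> \<eta> \<in> QpN p \<Longrightarrow> seq_sub p \<xi> \<eta> = (\<lambda>i. \<xi> i \<ominus>\<^bsub>R\<^esub> \<eta> i)"
  unfolding seq_sub_def by (simp add: QpN_carrier)

lemma delta_eq: "delta p i = (\<lambda>j. if j = i then \<one>\<^bsub>R\<^esub> else \<zero>\<^bsub>R\<^esub>)"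
  unfolding delta_def Qp_ring_ops by (rule refl)

lemma delta_in_QpN: "delta p i \<in> QpN p"
  unfolding delta_eq by (rule finite_support_in_QpN[of _ i]) auto

lemma seq_norm_le_1_iff: "\<xi> \<in> QpN p \<Longrightarrow> seq_norm p \<xi> \<le> 1 \<longleftrightarrow> (\<forall>i. \<xi> i \<in> Zp p)"
proof
  assume \<xi>: "\<xi> \<in> QpN p" and "seq_norm p \<xi> \<le> 1"
  have "range (\<lambda>i. qp_norm p (\<xi> i)) \<subseteq> {..1} \<union> (\<lambda>i. qp_norm p (\<xi> i)) ` {i. qp_norm p (\<xi> i) > 1}"
    by auto
  hence "bdd_above (range (\<lambda>i. qp_norm p (\<xi> i)))"
    using \<xi> unfolding QpN_iff by (meson bdd_above_Un bdd_above_Iic bdd_above_finite bdd_above_mono finite_imageI)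
  hence "qp_norm p (\<xi> i) \<le> seq_norm p \<xi>" for i unfolding seq_norm_def by (simp add: cSup_upper)
  thus "\<forall>i. \<xi> i \<in> Zp p" using \<xi> \<open>seq_norm p \<xi> \<le> 1\<close> by (auto simp: Zp_iff QpN_carrier intro: order_trans)
next
  assume "\<forall>i. \<xi> i \<in> Zp p"
  thus "seq_norm p \<xi> \<le> 1" unfolding seq_norm_def Zp_iff by (auto intro: cSup_least)
qed

lemma topspace_box_top: "topspace (box_top p P) = {\<xi>. \<forall>i. \<xi> i \<in> carrier R \<and> (i \<notin> P \<longrightarrow> \<xi> i \<in> Zp p)}"
  unfolding box_top_def using Zp_carrier by (auto simp: PiE_def Pi_def)

lemma box_top_subset_QpN: "finite P \<Longrightarrow> topspace (box_top p P) \<subseteq> QpN p"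
proof
  fix \<xi> assume P: "finite P" and \<xi>: "\<xi> \<in> topspace (box_top p P)"
  hence "{i. qp_norm p (\<xi> i) > 1} \<subseteq> P" unfolding topspace_box_top Zp_iff by force
  thus "\<xi> \<in> QpN p" using P \<xi> finite_subset unfolding QpN_iff topspace_box_top by blast
qed

lemma QpN_in_box_top: "\<xi> \<in> QpN p \<Longrightarrow> \<xi> \<in> topspace (box_top p {i. qp_norm p (\<xi> i) > 1})"
  unfolding QpN_iff topspace_box_top Zp_iff by force

lemma openin_tau:
  "openin (tau p) A \<longleftrightarrow> A \<subseteq> QpN p \<and> (\<forall>P. finite P \<longrightarrow> openin (box_top p P) (A \<inter> topspace (box_top p P)))"
  using istopology_coherent[of "QpN p" "Collect finite" "box_top p"] unfolding tau_def by simp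

lemma topspace_tau [simp]: "topspace (tau p) = QpN p"
proof -
  have "openin (tau p) (QpN p)"
    unfolding openin_tau using box_top_subset_QpN by (simp add: Int_absorb1)
  thus ?thesis using openin_subset openin_tau[of "topspace (tau p)"] by blast
qed

lemma continuous_map_box_top_coord: "continuous_map (box_top p P) (qp_top p) (\<lambda>\<xi>. \<xi> j)"
proof -
  have "continuous_map (box_top p P) (if j \<in> P then qp_top p else subtopology (qp_top p) (Zp p)) (\<lambda>\<xi>. \<xi> j)"
    unfolding box_top_def by (rule continuous_map_product_projection) simp
  thus ?thesis by (cases "j \<in> P") (auto dest: continuous_map_into_fulltopology)
qed

lemma openin_tau_coord: "openin (qp_top p) U \<Longrightarrow> openin (tau p) {\<eta> \<in> QpN p. \<eta> j \<in> U}"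
  unfolding openin_tau
proof (intro conjI allI impI)
  fix P :: "nat set" assume U: "openin (qp_top p) U" and P: "finite P"
  have "{\<eta> \<in> QpN p. \<eta> j \<in> U} \<inter> topspace (box_top p P) = {\<xi> \<in> topspace (box_top p P). \<xi> j \<in> U}"
    using box_top_subset_QpN[OF P] by blast
  thus "openin (box_top p P) ({\<eta> \<in> QpN p. \<eta> j \<in> U} \<inter> topspace (box_top p P))"
    using openin_continuous_map_preimage[OF continuous_map_box_top_coord U] by simp
qed blast

lemma continuous_map_tauI:
  assumes "\<And>P. finite P \<Longrightarrow> \<exists>P'. finite P' \<and> (\<forall>\<xi>\<in>topspace (box_top p P). T \<xi> \<in> topspace (box_top p P'))
              \<and> (\<forall>i. continuous_map (box_top p P) (qp_top p) (\<lambda>\<xi>. T \<xi> i))"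
  shows "continuous_map (tau p) (tau p) T"
  unfolding continuous_map_def
proof (intro conjI allI impI)
  show "T \<in> topspace (tau p) \<rightarrow> topspace (tau p)"
  proof
    fix \<xi> assume "\<xi> \<in> topspace (tau p)"
    hence "\<xi> \<in> topspace (box_top p {i. qp_norm p (\<xi> i) > 1})" "finite {i. qp_norm p (\<xi> i) > 1}"
      using QpN_in_box_top by (auto simp: QpN_iff)
    thus "T \<xi> \<in> topspace (tau p)" using assms box_top_subset_QpN by fastforce
  qed
  fix A assume A: "openin (tau p) A"
  show "openin (tau p) {\<xi> \<in> topspace (tau p). T \<xi> \<in> A}"
    unfolding openin_tau
  proof (intro conjI allI impI)
    fix P :: "nat set" assume P: "finite P"
    obtain P' where P': "finite P'" "\<forall>\<xi>\<in>topspace (box_top p P). T \<xi> \<in> topspace (box_top p P')"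
      "\<forall>i. continuous_map (box_top p P) (qp_top p) (\<lambda>\<xi>. T \<xi> i)"
      using assms[OF P] by blast
    have "continuous_map (box_top p P) (box_top p P') T"
      unfolding box_top_def[of p P'] continuous_map_componentwise_UNIV
    proof
      fix k
      have "(\<lambda>\<xi>. T \<xi> k) \<in> topspace (box_top p P) \<rightarrow> Zp p" if "k \<notin> P'"
        using P'(2) that unfolding topspace_box_top[of P'] by blast
      thus "continuous_map (box_top p P) (if k \<in> P' then qp_top p else subtopology (qp_top p) (Zp p)) (\<lambda>\<xi>. T \<xi> k)"
        using P'(3) by (simp add: continuous_map_in_subtopology)
    qed
    moreover have "openin (box_top p P') (A \<inter> topspace (box_top p P'))" using A P' openin_tau by blast
    ultimately have "openin (box_top p P) {\<xi> \<in> topspace (box_top p P). T \<xi> \<in> A \<inter> topspace (box_top p P')}"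
      by (rule openin_continuous_map_preimage)
    moreover have "{\<xi> \<in> topspace (box_top p P). T \<xi> \<in> A \<inter> topspace (box_top p P')}
        = {\<xi> \<in> topspace (tau p). T \<xi> \<in> A} \<inter> topspace (box_top p P)"
      using P'(2) box_top_subset_QpN[OF P] by auto
    ultimately show "openin (box_top p P) ({\<xi> \<in> topspace (tau p). T \<xi> \<in> A} \<inter> topspace (box_top p P))"
      by simp
  qed auto
qed

lemma continuous_map_tau_coord:
  assumes T: "continuous_map (tau p) (tau p) T" and P: "finite P"
  shows "continuous_map (box_top p P) (qp_top p) (\<lambda>\<xi>. T \<xi> j)"
  unfolding continuous_map_def
proof (intro conjI allI impI)
  have T_QpN: "T \<xi> \<in> QpN p" if "\<xi> \<in> topspace (box_top p P)" for \<xi>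
    using continuous_map_image_subset_topspace[OF T] box_top_subset_QpN[OF P] that by auto
  thus "(\<lambda>\<xi>. T \<xi> j) \<in> topspace (box_top p P) \<rightarrow> topspace (qp_top p)"
    by (simp add: QpN_carrier)
  fix U assume U: "openin (qp_top p) U"
  have "openin (tau p) {\<xi> \<in> topspace (tau p). T \<xi> \<in> {\<eta> \<in> QpN p. \<eta> j \<in> U}}"
    by (rule openin_continuous_map_preimage[OF T openin_tau_coord[OF U]])
  hence "openin (box_top p P) ({\<xi> \<in> QpN p. T \<xi> \<in> {\<eta> \<in> QpN p. \<eta> j \<in> U}} \<inter> topspace (box_top p P))"
    using P unfolding openin_tau by simp
  moreover have "{\<xi> \<in> QpN p. T \<xi> \<in> {\<eta> \<in> QpN p. \<eta> j \<in> U}} \<inter> topspace (box_top p P)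
      = {\<xi> \<in> topspace (box_top p P). T \<xi> j \<in> U}"
    using box_top_subset_QpN[OF P] T_QpN by blast
  ultimately show "openin (box_top p P) {\<xi> \<in> topspace (box_top p P). T \<xi> j \<in> U}" by simp
qed

text \<open>The integral points are the box \<open>box_top p {}\<close>, a product of the compact-open sets \<open>\<int>\<^sub>p\<close>,
  in which the finitely supported points are dense; and \<open>{\<eta>. |\<eta> j|\<^sub>p > 1}\<close> is open.\<close>
lemma tau_continuous_Zp_by_truncation:
  assumes T: "continuous_map (tau p) (tau p) T"
    and trunc: "\<And>\<zeta> N. (\<And>i. \<zeta> i \<in> Zp p) \<Longrightarrow> (\<And>i. N < i \<Longrightarrow> \<zeta> i = \<zero>\<^bsub>R\<^esub>) \<Longrightarrow> T \<zeta> j \<in> Zp p"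
    and \<xi>: "\<And>i. \<xi> i \<in> Zp p"
  shows "T \<xi> j \<in> Zp p"
proof (rule ccontr)
  assume "T \<xi> j \<notin> Zp p"
  moreover have \<xi>_QpN: "\<xi> \<in> QpN p" using \<xi> by (rule Zp_valued_in_QpN)
  ultimately have "T \<xi> \<in> {\<eta> \<in> QpN p. qp_norm p (\<eta> j) > 1}"
    using continuous_map_image_subset_topspace[OF T] by (auto simp: Zp_iff QpN_carrier)
  let ?U = "{\<zeta> \<in> topspace (tau p). T \<zeta> \<in> {\<eta> \<in> QpN p. qp_norm p (\<eta> j) > 1}}"
  have "?U = {\<zeta> \<in> topspace (tau p). T \<zeta> \<in> {\<eta> \<in> QpN p. \<eta> j \<in> {y \<in> carrier R. qp_norm p y > 1}}}"
    by (auto simp: QpN_carrier)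
  hence "openin (tau p) ?U"
    using openin_continuous_map_preimage[OF T openin_tau_coord[OF openin_qp_norm_gt_1]] by simp
  hence "openin (box_top p {}) (?U \<inter> topspace (box_top p {}))" unfolding openin_tau by blast
  moreover have \<xi>_U: "\<xi> \<in> ?U \<inter> topspace (box_top p {})"
    using \<xi> \<xi>_QpN \<open>T \<xi> \<in> _\<close> by (simp add: topspace_box_top Zp_carrier)
  let ?X = "\<lambda>i::nat. if i \<in> {} then qp_top p else subtopology (qp_top p) (Zp p)"
  have "openin (product_topology ?X UNIV) (?U \<inter> topspace (box_top p {}))"
    using calculation(1) unfolding box_top_def .
  then obtain B where B: "finite {i \<in> UNIV. B i \<noteq> topspace (?X i)}"
      "\<xi> \<in> Pi\<^sub>E UNIV B" "Pi\<^sub>E UNIV B \<subseteq> ?U \<inter> topspace (box_top p {})"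
    using \<xi>_U unfolding openin_product_topology_alt by meson
  have topspace_X: "topspace (?X i) = Zp p" for i using Zp_carrier by auto
  obtain N where N: "{i \<in> UNIV. B i \<noteq> topspace (?X i)} \<subseteq> {..<N}"
    using finite_nat_bounded[OF B(1)] by blast
  define \<zeta> where "\<zeta> i = (if i < N then \<xi> i else \<zero>\<^bsub>R\<^esub>)" for i
  have \<zeta>_Zp: "\<zeta> i \<in> Zp p" for i unfolding \<zeta>_def using \<xi> by simp
  have "\<zeta> i \<in> B i" for i
  proof (cases "i < N")
    case True thus ?thesis using B(2) unfolding \<zeta>_def PiE_iff by simp
  next
    case False
    hence "B i = topspace (?X i)" using N by auto
    thus ?thesis using \<zeta>_Zp topspace_X by simp
  qed
  hence "\<zeta> \<in> Pi\<^sub>E UNIV B" by (simp add: PiE_iff)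
  hence "qp_norm p (T \<zeta> j) > 1" using B(3) by auto
  moreover have "T \<zeta> j \<in> Zp p" using trunc[of \<zeta> N] \<zeta>_Zp by (simp add: \<zeta>_def)
  ultimately show False by (simp add: Zp_iff)
qed

section \<open>\<open>\<int>\<^sub>p\<close>-linear operators\<close>

lemma zp_linear_QpN: "zp_linear p T \<Longrightarrow> \<xi> \<in> QpN p \<Longrightarrow> T \<xi> \<in> QpN p"
  unfolding zp_linear_def by blast

lemma zp_linear_add:
  "zp_linear p T \<Longrightarrow> \<xi> \<in> QpN p \<Longrightarrow> \<eta> \<in> QpN p \<Longrightarrow> T (\<lambda>i. \<xi> i \<oplus>\<^bsub>R\<^esub> \<eta> i) = (\<lambda>i. T \<xi> i \<oplus>\<^bsub>R\<^esub> T \<eta> i)"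
  unfolding zp_linear_def seq_add_eq by blast

lemma zp_linear_smult:
  "zp_linear p T \<Longrightarrow> a \<in> Zp p \<Longrightarrow> \<xi> \<in> QpN p \<Longrightarrow> T (\<lambda>i. a \<otimes>\<^bsub>R\<^esub> \<xi> i) = (\<lambda>i. a \<otimes>\<^bsub>R\<^esub> T \<xi> i)"
  unfolding zp_linear_def seq_smult_eq by blast

lemma zp_linear_diff:
  assumes T: "zp_linear p T" and \<xi>: "\<xi> \<in> QpN p" and \<eta>: "\<eta> \<in> QpN p"
  shows "T (\<lambda>i. \<xi> i \<ominus>\<^bsub>R\<^esub> \<eta> i) = (\<lambda>i. T \<xi> i \<ominus>\<^bsub>R\<^esub> T \<eta> i)"
proof -
  have m1: "\<ominus>\<^bsub>R\<^esub> \<one>\<^bsub>R\<^esub> \<in> Zp p" by (simp add: Zp_minus)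
  have "(\<lambda>i. \<xi> i \<ominus>\<^bsub>R\<^esub> \<eta> i) = (\<lambda>i. \<xi> i \<oplus>\<^bsub>R\<^esub> \<ominus>\<^bsub>R\<^esub> \<one>\<^bsub>R\<^esub> \<otimes>\<^bsub>R\<^esub> \<eta> i)"
    using \<eta> by (simp add: a_minus_def R.l_minus QpN_carrier)
  hence "T (\<lambda>i. \<xi> i \<ominus>\<^bsub>R\<^esub> \<eta> i) = (\<lambda>i. T \<xi> i \<oplus>\<^bsub>R\<^esub> \<ominus>\<^bsub>R\<^esub> \<one>\<^bsub>R\<^esub> \<otimes>\<^bsub>R\<^esub> T \<eta> i)"
    using zp_linear_add[OF T \<xi> QpN_smult[OF m1 \<eta>]] zp_linear_smult[OF T m1 \<eta>] by simp
  thus ?thesis using zp_linear_QpN[OF T \<eta>] by (simp add: a_minus_def R.l_minus QpN_carrier)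
qed

text \<open>\<open>\<int>\<^sub>p\<close>-linearity upgrades to \<open>\<rat>\<^sub>p\<close>-linearity: a scalar outside \<open>\<int>\<^sub>p\<close> has its inverse in \<open>\<int>\<^sub>p\<close>.\<close>
lemma zp_linear_qp_smult:
  assumes T: "zp_linear p T" and c: "c \<in> carrier R" and \<xi>: "\<xi> \<in> QpN p"
    and c\<xi>: "(\<lambda>i. c \<otimes>\<^bsub>R\<^esub> \<xi> i) \<in> QpN p"
  shows "T (\<lambda>i. c \<otimes>\<^bsub>R\<^esub> \<xi> i) = (\<lambda>i. c \<otimes>\<^bsub>R\<^esub> T \<xi> i)"
proof (cases "c \<in> Zp p")
  case True
  thus ?thesis using zp_linear_smult[OF T _ \<xi>] by simp
next
  case False
  hence c0: "c \<noteq> \<zero>\<^bsub>R\<^esub>" and big: "qp_norm p c > 1" using c by (auto simp: Zp_iff)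
  define a where "a = inv\<^bsub>R\<^esub> c"
  have a: "a \<in> carrier R" "a \<otimes>\<^bsub>R\<^esub> c = \<one>\<^bsub>R\<^esub>"
    using c c0 R.field_Units unfolding a_def by auto
  have "qp_norm p a * qp_norm p c = 1" using qp_norm_inv[OF c c0] unfolding a_def .
  hence "qp_norm p a = 1 / qp_norm p c" using big by (simp add: eq_divide_eq)
  hence "qp_norm p a \<le> 1" using big by simp
  hence aZ: "a \<in> Zp p" using a(1) by (simp add: Zp_iff)
  have "\<xi> = (\<lambda>i. a \<otimes>\<^bsub>R\<^esub> (c \<otimes>\<^bsub>R\<^esub> \<xi> i))"
    using a c \<xi> by (simp add: R.m_assoc[symmetric] QpN_carrier)
  hence "T \<xi> = (\<lambda>i. a \<otimes>\<^bsub>R\<^esub> T (\<lambda>i. c \<otimes>\<^bsub>R\<^esub> \<xi> i) i)"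
    using zp_linear_smult[OF T aZ c\<xi>] by metis
  hence "c \<otimes>\<^bsub>R\<^esub> T \<xi> i = T (\<lambda>i. c \<otimes>\<^bsub>R\<^esub> \<xi> i) i" for i
    using a c QpN_carrier[OF zp_linear_QpN[OF T c\<xi>]]
    by (simp add: R.m_assoc[symmetric] R.m_comm[of c a])
  thus ?thesis by auto
qed

lemma zp_linear_finite_support:
  assumes T: "zp_linear p T"
  shows "(\<And>i. \<zeta> i \<in> carrier R) \<Longrightarrow> (\<And>i. i > N \<Longrightarrow> \<zeta> i = \<zero>\<^bsub>R\<^esub>) \<Longrightarrow>
     T \<zeta> = (\<lambda>j. finsum R (\<lambda>i. \<zeta> i \<otimes>\<^bsub>R\<^esub> T (delta p i) j) {..N})"
proof (induction N arbitrary: \<zeta>)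
  have single: "T (\<lambda>j. c \<otimes>\<^bsub>R\<^esub> delta p i j) = (\<lambda>j. c \<otimes>\<^bsub>R\<^esub> T (delta p i) j)" if "c \<in> carrier R" for c i
    using that by (intro zp_linear_qp_smult[OF T] delta_in_QpN finite_support_in_QpN[of _ i])
      (auto simp: delta_eq)
  {
    case 0
    have "\<zeta> j = \<zeta> 0 \<otimes>\<^bsub>R\<^esub> delta p 0 j" for j
      using 0(1)[of 0] 0(2)[of j] by (cases "j = 0") (simp_all add: delta_eq)
    hence "\<zeta> = (\<lambda>j. \<zeta> 0 \<otimes>\<^bsub>R\<^esub> delta p 0 j)" by (rule ext)
    thus ?case using single[of "\<zeta> 0" 0] 0 zp_linear_QpN[OF T delta_in_QpN] by (simp add: QpN_carrier)
  next
    case (Suc N)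
    let ?a = "\<lambda>j. if j = Suc N then \<zero>\<^bsub>R\<^esub> else \<zeta> j"
    let ?b = "\<lambda>j. \<zeta> (Suc N) \<otimes>\<^bsub>R\<^esub> delta p (Suc N) j"
    have a: "?a \<in> QpN p" by (rule finite_support_in_QpN[of _ N]) (use Suc.prems in auto)
    have b: "?b \<in> QpN p" by (rule finite_support_in_QpN[of _ "Suc N"]) (use Suc.prems in \<open>auto simp: delta_eq\<close>)
    have col: "T (delta p i) j \<in> carrier R" for i j
      using zp_linear_QpN[OF T delta_in_QpN] by (simp add: QpN_carrier)
    have "\<zeta> j = ?a j \<oplus>\<^bsub>R\<^esub> ?b j" for j
      using Suc.prems(1)[of j] Suc.prems(1)[of "Suc N"] by (cases "j = Suc N") (simp_all add: delta_eq)
    hence "\<zeta> = (\<lambda>j. ?a j \<oplus>\<^bsub>R\<^esub> ?b j)" by (rule ext)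
    hence "T \<zeta> = (\<lambda>j. T ?a j \<oplus>\<^bsub>R\<^esub> T ?b j)" using zp_linear_add[OF T a b] by simp
    moreover have "T ?a = (\<lambda>j. finsum R (\<lambda>i. ?a i \<otimes>\<^bsub>R\<^esub> T (delta p i) j) {..N})"
      using Suc.prems by (intro Suc.IH) auto
    moreover have "\<dots> = (\<lambda>j. finsum R (\<lambda>i. \<zeta> i \<otimes>\<^bsub>R\<^esub> T (delta p i) j) {..N})"
      using Suc.prems col by (intro ext R.finsum_cong') auto
    moreover have "T ?b = (\<lambda>j. \<zeta> (Suc N) \<otimes>\<^bsub>R\<^esub> T (delta p (Suc N)) j)"
      using single Suc.prems by simp
    moreover have "finsum R (\<lambda>i. \<zeta> i \<otimes>\<^bsub>R\<^esub> T (delta p i) j) {..Suc N}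
        = finsum R (\<lambda>i. \<zeta> i \<otimes>\<^bsub>R\<^esub> T (delta p i) j) {..N} \<oplus>\<^bsub>R\<^esub> \<zeta> (Suc N) \<otimes>\<^bsub>R\<^esub> T (delta p (Suc N)) j" for j
      unfolding atMost_Suc using Suc.prems col
      by (subst R.finsum_insert) (auto simp: R.a_comm intro!: R.finsum_closed)
    ultimately show ?case by simp
  }
qed

lemma zp_linear_compose_cong:
  assumes S: "zp_linear p S" and T: "zp_linear p T" and F: "\<And>\<xi>. \<xi> \<in> QpN p \<Longrightarrow> F \<xi> = S (T \<xi>)"
  shows "zp_linear p F"
  unfolding zp_linear_def seq_add_eq seq_smult_eq
proof (intro conjI ballI)
  fix \<xi> \<eta> assume \<xi>: "\<xi> \<in> QpN p" and \<eta>: "\<eta> \<in> QpN p"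
  show "F \<xi> \<in> QpN p" using F \<xi> zp_linear_QpN[OF S zp_linear_QpN[OF T]] by simp
  show "F (\<lambda>i. \<xi> i \<oplus>\<^bsub>R\<^esub> \<eta> i) = (\<lambda>i. F \<xi> i \<oplus>\<^bsub>R\<^esub> F \<eta> i)"
    using \<xi> \<eta> by (simp add: F QpN_add zp_linear_add[OF T] zp_linear_add[OF S] zp_linear_QpN[OF T])
next
  fix a \<xi> assume a: "a \<in> Zp p" and \<xi>: "\<xi> \<in> QpN p"
  show "F (\<lambda>i. a \<otimes>\<^bsub>R\<^esub> \<xi> i) = (\<lambda>i. a \<otimes>\<^bsub>R\<^esub> F \<xi> i)"
    using a \<xi> by (simp add: F QpN_smult zp_linear_smult[OF T] zp_linear_smult[OF S] zp_linear_QpN[OF T])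
qed

lemma op_diff_eq: "zp_linear p S \<Longrightarrow> zp_linear p T \<Longrightarrow> \<xi> \<in> QpN p \<Longrightarrow>
    op_diff p S T \<xi> = (\<lambda>i. S \<xi> i \<ominus>\<^bsub>R\<^esub> T \<xi> i)"
  unfolding op_diff_def by (simp add: seq_sub_eq zp_linear_QpN)

lemma zp_linear_op_diff:
  assumes S: "zp_linear p S" and T: "zp_linear p T"
  shows "zp_linear p (op_diff p S T)"
  unfolding zp_linear_def seq_add_eq seq_smult_eq
proof (intro conjI ballI)
  fix \<xi> \<eta> assume \<xi>: "\<xi> \<in> QpN p" and \<eta>: "\<eta> \<in> QpN p"
  have c: "S \<xi> i \<in> carrier R" "T \<xi> i \<in> carrier R" "S \<eta> i \<in> carrier R" "T \<eta> i \<in> carrier R" for i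
    using \<xi> \<eta> by (simp_all add: QpN_carrier zp_linear_QpN S T)
  show "op_diff p S T \<xi> \<in> QpN p" using \<xi> by (simp add: op_diff_eq S T QpN_diff zp_linear_QpN)
  have "S \<xi> i \<oplus>\<^bsub>R\<^esub> S \<eta> i \<ominus>\<^bsub>R\<^esub> (T \<xi> i \<oplus>\<^bsub>R\<^esub> T \<eta> i) = (S \<xi> i \<ominus>\<^bsub>R\<^esub> T \<xi> i) \<oplus>\<^bsub>R\<^esub> (S \<eta> i \<ominus>\<^bsub>R\<^esub> T \<eta> i)" for i
    using c[of i] by algebra
  thus "op_diff p S T (\<lambda>i. \<xi> i \<oplus>\<^bsub>R\<^esub> \<eta> i) = (\<lambda>i. op_diff p S T \<xi> i \<oplus>\<^bsub>R\<^esub> op_diff p S T \<eta> i)"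
    using \<xi> \<eta> by (simp add: op_diff_eq S T QpN_add zp_linear_add)
next
  fix a \<xi> assume a: "a \<in> Zp p" and \<xi>: "\<xi> \<in> QpN p"
  have c: "S \<xi> i \<in> carrier R" "T \<xi> i \<in> carrier R" for i
    using \<xi> by (simp_all add: QpN_carrier zp_linear_QpN S T)
  have "a \<otimes>\<^bsub>R\<^esub> S \<xi> i \<ominus>\<^bsub>R\<^esub> a \<otimes>\<^bsub>R\<^esub> T \<xi> i = a \<otimes>\<^bsub>R\<^esub> (S \<xi> i \<ominus>\<^bsub>R\<^esub> T \<xi> i)" for i
    using c[of i] Zp_carrier[OF a] by algebra
  thus "op_diff p S T (\<lambda>i. a \<otimes>\<^bsub>R\<^esub> \<xi> i) = (\<lambda>i. a \<otimes>\<^bsub>R\<^esub> op_diff p S T \<xi> i)"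
    using a \<xi> by (simp add: op_diff_eq S T QpN_smult zp_linear_smult)
qed

lemma op_diff_idempotent:
  assumes e: "zp_linear p e" "\<And>\<xi>. \<xi> \<in> QpN p \<Longrightarrow> e (e \<xi>) = e \<xi>"
    and f: "zp_linear p f" "\<And>\<xi>. \<xi> \<in> QpN p \<Longrightarrow> f (f \<xi>) = f \<xi>"
    and ef: "\<And>\<xi>. \<xi> \<in> QpN p \<Longrightarrow> f (e \<xi>) = f \<xi> \<and> e (f \<xi>) = f \<xi>"
    and \<xi>: "\<xi> \<in> QpN p"
  shows "op_diff p e f (op_diff p e f \<xi>) = op_diff p e f \<xi>"
proof -
  have e\<xi>: "e \<xi> \<in> QpN p" and f\<xi>: "f \<xi> \<in> QpN p" using \<xi> e(1) f(1) by (simp_all add: zp_linear_QpN)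
  let ?\<eta> = "op_diff p e f \<xi>"
  have \<eta>: "?\<eta> = (\<lambda>i. e \<xi> i \<ominus>\<^bsub>R\<^esub> f \<xi> i)" using \<xi> by (simp add: op_diff_eq e(1) f(1))
  have "e ?\<eta> = ?\<eta>" unfolding \<eta> using \<xi> e\<xi> f\<xi> by (simp add: zp_linear_diff[OF e(1)] e(2) ef)
  moreover have "f ?\<eta> i = \<zero>\<^bsub>R\<^esub>" for i
    unfolding \<eta> zp_linear_diff[OF f(1) e\<xi> f\<xi>] using \<xi> f\<xi>
    by (simp add: f(2) ef QpN_carrier R.r_neg a_minus_def)
  ultimately show ?thesis
    using \<xi> e\<xi> f\<xi> zp_linear_QpN[OF zp_linear_op_diff[OF e(1) f(1)]]
    by (simp add: op_diff_eq e(1) f(1) a_minus_def QpN_carrier)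
qed

lemma op_norm_le_1:
  assumes "\<And>\<xi>. \<xi> \<in> QpN p \<Longrightarrow> seq_norm p \<xi> \<le> 1 \<Longrightarrow> seq_norm p (T \<xi>) \<le> 1"
  shows "bdd_above {seq_norm p (T \<xi>) | \<xi>. \<xi> \<in> QpN p \<and> seq_norm p \<xi> \<le> 1}" "op_norm p T \<le> 1"
proof -
  let ?S = "{seq_norm p (T \<xi>) | \<xi>. \<xi> \<in> QpN p \<and> seq_norm p \<xi> \<le> 1}"
  have le: "s \<le> 1" if "s \<in> ?S" for s using assms that by blast
  thus "bdd_above ?S" by (rule bdd_aboveI)
  have "(\<lambda>i. \<zero>\<^bsub>R\<^esub>) \<in> QpN p" "seq_norm p (\<lambda>i. \<zero>\<^bsub>R\<^esub>) \<le> 1"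
    using Zp_valued_in_QpN[of "\<lambda>i. \<zero>\<^bsub>R\<^esub>"] seq_norm_le_1_iff by simp_all
  hence "?S \<noteq> {}" by blast
  thus "op_norm p T \<le> 1" unfolding op_norm_def using le by (rule cSup_least)
qed

section \<open>Integral echelon bases of finite-dimensional subspaces\<close>

definition Qp_subspace :: "qpseq set \<Rightarrow> bool" where
  "Qp_subspace V \<longleftrightarrow> V \<subseteq> QpN p \<and> (\<lambda>j. \<zero>\<^bsub>R\<^esub>) \<in> V \<and>
     (\<forall>v\<in>V. \<forall>w\<in>V. (\<lambda>j. v j \<oplus>\<^bsub>R\<^esub> w j) \<in> V) \<and> (\<forall>a\<in>carrier R. \<forall>v\<in>V. (\<lambda>j. a \<otimes>\<^bsub>R\<^esub> v j) \<in> V)"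

definition echelon_basis :: "qpseq set \<Rightarrow> nat \<Rightarrow> (nat \<Rightarrow> nat) \<Rightarrow> (nat \<Rightarrow> qpseq) \<Rightarrow> bool" where
  "echelon_basis V d piv v \<longleftrightarrow> (\<forall>k<d. v k \<in> V) \<and>
     (\<forall>k<d. \<forall>l<d. v k (piv l) = (if k = l then \<one>\<^bsub>R\<^esub> else \<zero>\<^bsub>R\<^esub>)) \<and> (\<forall>k<d. \<forall>j. v k j \<in> Zp p)"

definition echelon_span :: "nat \<Rightarrow> (nat \<Rightarrow> nat) \<Rightarrow> (nat \<Rightarrow> qpseq) \<Rightarrow> qpseq \<Rightarrow> bool" where
  "echelon_span d piv v x \<longleftrightarrow> (\<forall>j. x j = finsum R (\<lambda>k. x (piv k) \<otimes>\<^bsub>R\<^esub> v k j) {..<d})"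

definition echelon_insert :: "nat \<Rightarrow> (nat \<Rightarrow> qpseq) \<Rightarrow> nat \<Rightarrow> qpseq \<Rightarrow> nat \<Rightarrow> qpseq" where
  "echelon_insert d v js w k = (if k < d then (\<lambda>j. v k j \<ominus>\<^bsub>R\<^esub> v k js \<otimes>\<^bsub>R\<^esub> w j) else w)"

lemma Qp_subspace_carrier: "Qp_subspace V \<Longrightarrow> v \<in> V \<Longrightarrow> v j \<in> carrier R"
  unfolding Qp_subspace_def using QpN_carrier by blast

lemma Qp_subspace_smult: "Qp_subspace V \<Longrightarrow> a \<in> carrier R \<Longrightarrow> v \<in> V \<Longrightarrow> (\<lambda>j. a \<otimes>\<^bsub>R\<^esub> v j) \<in> V"
  unfolding Qp_subspace_def by blast

lemma Qp_subspace_diff: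
  assumes V: "Qp_subspace V" and v: "v \<in> V" and w: "w \<in> V"
  shows "(\<lambda>j. v j \<ominus>\<^bsub>R\<^esub> w j) \<in> V"
proof -
  have "(\<lambda>j. v j \<ominus>\<^bsub>R\<^esub> w j) = (\<lambda>j. v j \<oplus>\<^bsub>R\<^esub> (\<ominus>\<^bsub>R\<^esub> \<one>\<^bsub>R\<^esub>) \<otimes>\<^bsub>R\<^esub> w j)"
    using Qp_subspace_carrier[OF V w] by (simp add: a_minus_def R.l_minus)
  thus ?thesis using V v Qp_subspace_smult[OF V _ w, of "\<ominus>\<^bsub>R\<^esub> \<one>\<^bsub>R\<^esub>"] unfolding Qp_subspace_def by simp
qed

lemma Qp_subspace_lincomb:
  fixes D :: nat
  assumes V: "Qp_subspace V" and "\<And>k. k < D \<Longrightarrow> w k \<in> V" "\<And>k. k < D \<Longrightarrow> c k \<in> carrier R"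
  shows "(\<lambda>j. finsum R (\<lambda>k. c k \<otimes>\<^bsub>R\<^esub> w k j) {..<D}) \<in> V"
  using assms(2,3)
proof (induction D)
  case 0 thus ?case using V unfolding Qp_subspace_def by simp
next
  case (Suc D)
  have "(\<lambda>j. c D \<otimes>\<^bsub>R\<^esub> w D j \<oplus>\<^bsub>R\<^esub> finsum R (\<lambda>k. c k \<otimes>\<^bsub>R\<^esub> w k j) {..<D}) \<in> V"
    using V Suc Qp_subspace_smult[OF V] unfolding Qp_subspace_def by simp
  moreover have "finsum R (\<lambda>k. c k \<otimes>\<^bsub>R\<^esub> w k j) {..<Suc D}
      = c D \<otimes>\<^bsub>R\<^esub> w D j \<oplus>\<^bsub>R\<^esub> finsum R (\<lambda>k. c k \<otimes>\<^bsub>R\<^esub> w k j) {..<D}" for j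
    unfolding lessThan_Suc using Suc.prems Qp_subspace_carrier[OF V] by (intro R.finsum_insert) auto
  ultimately show ?case by simp
qed

text \<open>All multiples of \<open>r\<close> lie in \<open>\<rat>\<^sub>p(\<nat>)\<close>, so \<open>r\<close> tends to \<open>0\<close> and its largest coordinate
  is attained.\<close>
lemma Qp_subspace_max_norm_coord:
  assumes V: "Qp_subspace V" and r: "r \<in> V" and r0: "r j0 \<noteq> \<zero>\<^bsub>R\<^esub>"
  obtains js where "r js \<noteq> \<zero>\<^bsub>R\<^esub>" "\<And>j. qp_norm p (r j) \<le> qp_norm p (r js)"
proof -
  have rc: "r j \<in> carrier R" for j using Qp_subspace_carrier[OF V r] .
  define c where "c = inv\<^bsub>R\<^esub> (r j0)"
  have c: "c \<in> carrier R" "qp_norm p c * qp_norm p (r j0) = 1"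
    using rc r0 qp_norm_inv R.field_Units unfolding c_def by auto
  hence c_pos: "qp_norm p c > 0" by (metis qp_norm_nonneg less_eq_real_def mult_eq_0_iff zero_neq_one)
  have nm: "qp_norm p (c \<otimes>\<^bsub>R\<^esub> r j) = qp_norm p c * qp_norm p (r j)" for j
    using c rc by (simp add: qp_norm_mult)
  define S where "S = {j. qp_norm p (c \<otimes>\<^bsub>R\<^esub> r j) > 1}"
  have "(\<lambda>j. c \<otimes>\<^bsub>R\<^esub> r j) \<in> QpN p"
    using Qp_subspace_smult[OF V c(1) r] V unfolding Qp_subspace_def by blast
  hence "finite S" unfolding S_def QpN_iff by simp
  show ?thesis
  proof (cases "S = {}")
    case True
    hence le1: "qp_norm p (c \<otimes>\<^bsub>R\<^esub> r j) \<le> 1" for j unfolding S_def by (auto simp: not_less)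
    have "qp_norm p c * qp_norm p (r j) \<le> qp_norm p c * qp_norm p (r j0)" for j
      using c(2) nm[of j] le1[of j] by simp
    thus ?thesis using that[OF r0] c_pos by simp
  next
    case False
    have "Max ((\<lambda>j. qp_norm p (r j)) ` S) \<in> (\<lambda>j. qp_norm p (r j)) ` S"
      using \<open>finite S\<close> False by (intro Max_in) auto
    then obtain js where js: "js \<in> S" "qp_norm p (r js) = Max ((\<lambda>j. qp_norm p (r j)) ` S)" by auto
    have js_max: "qp_norm p (r j) \<le> qp_norm p (r js)" if "j \<in> S" for j
      unfolding js(2) using \<open>finite S\<close> that by (intro Max_ge) auto
    have big: "qp_norm p c * qp_norm p (r js) > 1" using js(1) nm[of js] unfolding S_def by simp
    have "qp_norm p (r j) \<le> qp_norm p (r js)" for j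
    proof (cases "j \<in> S")
      case False
      hence "qp_norm p c * qp_norm p (r j) \<le> qp_norm p c * qp_norm p (r js)"
        using big nm[of j] unfolding S_def by simp
      thus ?thesis using c_pos by simp
    qed (rule js_max)
    moreover have "r js \<noteq> \<zero>\<^bsub>R\<^esub>" using big by auto
    ultimately show ?thesis using that by blast
  qed
qed

lemma Qp_subspace_normalize:
  assumes V: "Qp_subspace V" and r: "r \<in> V" and r0: "\<not> (\<forall>j. r j = \<zero>\<^bsub>R\<^esub>)"
  obtains js w where "w \<in> V" "\<And>j. w j \<in> Zp p" "w js = \<one>\<^bsub>R\<^esub>"
    "\<And>j. r j = r js \<otimes>\<^bsub>R\<^esub> w j" "\<And>j. r j = \<zero>\<^bsub>R\<^esub> \<Longrightarrow> w j = \<zero>\<^bsub>R\<^esub>"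
proof -
  have rc: "r j \<in> carrier R" for j using Qp_subspace_carrier[OF V r] .
  obtain js where js: "r js \<noteq> \<zero>\<^bsub>R\<^esub>" "\<And>j. qp_norm p (r j) \<le> qp_norm p (r js)"
    using r0 Qp_subspace_max_norm_coord[OF V r] by blast
  define a where "a = inv\<^bsub>R\<^esub> (r js)"
  have a: "a \<in> carrier R" "a \<otimes>\<^bsub>R\<^esub> r js = \<one>\<^bsub>R\<^esub>" "r js \<otimes>\<^bsub>R\<^esub> a = \<one>\<^bsub>R\<^esub>"
    using rc js(1) R.field_Units unfolding a_def by auto
  have na: "qp_norm p a * qp_norm p (r js) = 1" unfolding a_def by (rule qp_norm_inv[OF rc js(1)])
  define w where "w j = a \<otimes>\<^bsub>R\<^esub> r j" for j
  show ?thesis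
  proof (rule that)
    show "w \<in> V" unfolding w_def[abs_def] by (rule Qp_subspace_smult[OF V a(1) r])
    show "w js = \<one>\<^bsub>R\<^esub>" unfolding w_def using a by simp
    show "r j = r js \<otimes>\<^bsub>R\<^esub> w j" for j unfolding w_def using a rc by (simp add: R.m_assoc[symmetric])
    show "r j = \<zero>\<^bsub>R\<^esub> \<Longrightarrow> w j = \<zero>\<^bsub>R\<^esub>" for j unfolding w_def using a by simp
    have "qp_norm p (w j) = qp_norm p a * qp_norm p (r j)" for j
      unfolding w_def using a rc by (simp add: qp_norm_mult)
    also have "\<dots> j \<le> qp_norm p a * qp_norm p (r js)" for j using js(2) a by (intro mult_left_mono) simp_all
    finally show "w j \<in> Zp p" for j using na a rc unfolding w_def Zp_iff by simp
  qed
qed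

lemma echelon_basis_insert:
  assumes V: "Qp_subspace V" and B: "echelon_basis V d piv v"
    and w: "w \<in> V" "\<And>j. w j \<in> Zp p" "w js = \<one>\<^bsub>R\<^esub>" "\<And>l. l < d \<Longrightarrow> w (piv l) = \<zero>\<^bsub>R\<^esub>"
  shows "echelon_basis V (Suc d) (piv(d := js)) (echelon_insert d v js w)"
  unfolding echelon_basis_def
proof (intro conjI allI impI)
  have vZ: "v k j \<in> Zp p" if "k < d" for k j using B that unfolding echelon_basis_def by blast
  have vV: "v k \<in> V" if "k < d" for k using B that unfolding echelon_basis_def by blast
  have vpiv: "v k (piv l) = (if k = l then \<one>\<^bsub>R\<^esub> else \<zero>\<^bsub>R\<^esub>)" if "k < d" "l < d" for k l
    using B that unfolding echelon_basis_def by blast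
  have js: "js \<noteq> piv l" if "l < d" for l using w(3) w(4)[OF that] by auto
  fix k assume k: "k < Suc d"
  show "echelon_insert d v js w k \<in> V"
    unfolding echelon_insert_def
    using Qp_subspace_diff[OF V vV Qp_subspace_smult[OF V _ w(1)]] Zp_carrier[OF vZ] w(1) by simp
  show "echelon_insert d v js w k j \<in> Zp p" for j
    unfolding echelon_insert_def using vZ w(2) by (simp add: Zp_diff Zp_mult)
  fix l assume l: "l < Suc d"
  show "echelon_insert d v js w k ((piv(d := js)) l) = (if k = l then \<one>\<^bsub>R\<^esub> else \<zero>\<^bsub>R\<^esub>)"
    using k l vpiv js w(3,4) Zp_carrier[OF vZ]
    by (cases "k < d"; cases "l < d") (auto simp: echelon_insert_def a_minus_def R.r_neg)
qed

lemma finsum_mult_diff_mult: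
  assumes "finite A" "t \<in> carrier R" "\<And>k. k \<in> A \<Longrightarrow> c k \<in> carrier R"
    "\<And>k. k \<in> A \<Longrightarrow> a k \<in> carrier R" "\<And>k. k \<in> A \<Longrightarrow> b k \<in> carrier R"
  shows "finsum R (\<lambda>k. c k \<otimes>\<^bsub>R\<^esub> (a k \<ominus>\<^bsub>R\<^esub> b k \<otimes>\<^bsub>R\<^esub> t)) A =
         finsum R (\<lambda>k. c k \<otimes>\<^bsub>R\<^esub> a k) A \<ominus>\<^bsub>R\<^esub> finsum R (\<lambda>k. c k \<otimes>\<^bsub>R\<^esub> b k) A \<otimes>\<^bsub>R\<^esub> t"
proof -
  have "c k \<otimes>\<^bsub>R\<^esub> (a k \<ominus>\<^bsub>R\<^esub> b k \<otimes>\<^bsub>R\<^esub> t) = c k \<otimes>\<^bsub>R\<^esub> a k \<ominus>\<^bsub>R\<^esub> (c k \<otimes>\<^bsub>R\<^esub> b k) \<otimes>\<^bsub>R\<^esub> t" if "k \<in> A" for k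
    using assms(2) assms(3-5)[OF that] by algebra
  hence "finsum R (\<lambda>k. c k \<otimes>\<^bsub>R\<^esub> (a k \<ominus>\<^bsub>R\<^esub> b k \<otimes>\<^bsub>R\<^esub> t)) A
      = finsum R (\<lambda>k. c k \<otimes>\<^bsub>R\<^esub> a k \<ominus>\<^bsub>R\<^esub> (c k \<otimes>\<^bsub>R\<^esub> b k) \<otimes>\<^bsub>R\<^esub> t) A"
    using assms by (intro R.finsum_cong') auto
  also have "\<dots> = finsum R (\<lambda>k. c k \<otimes>\<^bsub>R\<^esub> a k) A \<ominus>\<^bsub>R\<^esub> finsum R (\<lambda>k. (c k \<otimes>\<^bsub>R\<^esub> b k) \<otimes>\<^bsub>R\<^esub> t) A"
    using assms by (intro finsum_diff) auto
  also have "finsum R (\<lambda>k. (c k \<otimes>\<^bsub>R\<^esub> b k) \<otimes>\<^bsub>R\<^esub> t) A = finsum R (\<lambda>k. c k \<otimes>\<^bsub>R\<^esub> b k) A \<otimes>\<^bsub>R\<^esub> t"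
    using assms by (intro R.finsum_ldistr[symmetric]) auto
  finally show ?thesis .
qed

lemma echelon_span_insert:
  assumes V: "Qp_subspace V" and B: "echelon_basis V d piv v" and w: "w \<in> V" "w js = \<one>\<^bsub>R\<^esub>"
    and x: "x \<in> V" and c: "c \<in> carrier R"
    and x_eq: "\<And>j. x j = finsum R (\<lambda>k. x (piv k) \<otimes>\<^bsub>R\<^esub> v k j) {..<d} \<oplus>\<^bsub>R\<^esub> c \<otimes>\<^bsub>R\<^esub> w j"
  shows "echelon_span (Suc d) (piv(d := js)) (echelon_insert d v js w) x"
  unfolding echelon_span_def
proof
  fix j
  let ?S = "\<lambda>j. finsum R (\<lambda>k. x (piv k) \<otimes>\<^bsub>R\<^esub> v k j) {..<d}"
  have xc: "x i \<in> carrier R" "w i \<in> carrier R" for i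
    using Qp_subspace_carrier[OF V] x w by auto
  have vc: "v k i \<in> carrier R" if "k < d" for k i
    using B that Qp_subspace_carrier[OF V] unfolding echelon_basis_def by blast
  have Sc: "?S i \<in> carrier R" for i using xc vc by (auto intro!: R.finsum_closed)
  have old: "finsum R (\<lambda>k. x ((piv(d := js)) k) \<otimes>\<^bsub>R\<^esub> echelon_insert d v js w k j) {..<d}
      = finsum R (\<lambda>k. x (piv k) \<otimes>\<^bsub>R\<^esub> (v k j \<ominus>\<^bsub>R\<^esub> v k js \<otimes>\<^bsub>R\<^esub> w j)) {..<d}"
    using xc vc by (intro R.finsum_cong') (simp_all add: echelon_insert_def Pi_def)
  have "finsum R (\<lambda>k. x ((piv(d := js)) k) \<otimes>\<^bsub>R\<^esub> echelon_insert d v js w k j) {..<Suc d}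
      = x js \<otimes>\<^bsub>R\<^esub> w j \<oplus>\<^bsub>R\<^esub> finsum R (\<lambda>k. x (piv k) \<otimes>\<^bsub>R\<^esub> (v k j \<ominus>\<^bsub>R\<^esub> v k js \<otimes>\<^bsub>R\<^esub> w j)) {..<d}"
    unfolding lessThan_Suc old[symmetric] using xc vc
    by (subst R.finsum_insert) (simp_all add: echelon_insert_def Pi_def)
  also have "\<dots> = x js \<otimes>\<^bsub>R\<^esub> w j \<oplus>\<^bsub>R\<^esub> (?S j \<ominus>\<^bsub>R\<^esub> ?S js \<otimes>\<^bsub>R\<^esub> w j)"
    using xc vc by (subst finsum_mult_diff_mult) auto
  also have "\<dots> = ?S j \<oplus>\<^bsub>R\<^esub> c \<otimes>\<^bsub>R\<^esub> w j"
  proof -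
    have "x js = ?S js \<oplus>\<^bsub>R\<^esub> c" using x_eq[of js] w(2) c by simp
    moreover have "(a \<oplus>\<^bsub>R\<^esub> c) \<otimes>\<^bsub>R\<^esub> t \<oplus>\<^bsub>R\<^esub> (s \<ominus>\<^bsub>R\<^esub> a \<otimes>\<^bsub>R\<^esub> t) = s \<oplus>\<^bsub>R\<^esub> c \<otimes>\<^bsub>R\<^esub> t"
      if "a \<in> carrier R" "t \<in> carrier R" "s \<in> carrier R" for a t s
      using that c by algebra
    ultimately show ?thesis using Sc xc by simp
  qed
  also have "\<dots> = x j" using x_eq[of j] by simp
  finally show "x j = finsum R (\<lambda>k. x ((piv(d := js)) k) \<otimes>\<^bsub>R\<^esub> echelon_insert d v js w k j) {..<Suc d}"
    by simp
qed


lemma echelon_remainder: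
  assumes V: "Qp_subspace V" and B: "echelon_basis V d piv v" and y: "y \<in> V"
  defines "r \<equiv> \<lambda>j. y j \<ominus>\<^bsub>R\<^esub> finsum R (\<lambda>k. y (piv k) \<otimes>\<^bsub>R\<^esub> v k j) {..<d}"
  shows "r \<in> V" "\<And>l. l < d \<Longrightarrow> r (piv l) = \<zero>\<^bsub>R\<^esub>"
proof -
  have vV: "v k \<in> V" if "k < d" for k using B that unfolding echelon_basis_def by blast
  have yc: "y j \<in> carrier R" for j using Qp_subspace_carrier[OF V y] .
  show "r \<in> V"
    unfolding r_def using Qp_subspace_diff[OF V y Qp_subspace_lincomb[OF V vV yc]] by simp
  fix l assume l: "l < d"
  have "finsum R (\<lambda>k. y (piv k) \<otimes>\<^bsub>R\<^esub> v k (piv l)) {..<d}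
      = finsum R (\<lambda>k. y (piv k) \<otimes>\<^bsub>R\<^esub> (if k = l then \<one>\<^bsub>R\<^esub> else \<zero>\<^bsub>R\<^esub>)) {..<d}"
    using B l unfolding echelon_basis_def by (intro R.finsum_cong') (auto simp: yc)
  also have "\<dots> = y (piv l)" using l yc by (intro finsum_mult_delta) auto
  finally show "r (piv l) = \<zero>\<^bsub>R\<^esub>" unfolding r_def using yc by (simp add: a_minus_def R.r_neg)
qed

text \<open>One step of Gaussian elimination with maximal pivot: the remainder of \<open>y\<close> vanishes at the
  old pivots, and scaled by its largest coordinate it becomes integral.\<close>
lemma echelon_basis_extend:
  assumes V: "Qp_subspace V" and B: "echelon_basis V d piv v" and y: "y \<in> V"
  obtains d' piv' v' where "echelon_basis V d' piv' v'" "echelon_span d' piv' v' y"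
    "\<And>x. x \<in> V \<Longrightarrow> echelon_span d piv v x \<Longrightarrow> echelon_span d' piv' v' x"
proof -
  have vc: "v k j \<in> carrier R" if "k < d" for k j
    using B that Qp_subspace_carrier[OF V] unfolding echelon_basis_def by blast
  have yc: "y j \<in> carrier R" for j using Qp_subspace_carrier[OF V y] .
  let ?S = "\<lambda>j. finsum R (\<lambda>k. y (piv k) \<otimes>\<^bsub>R\<^esub> v k j) {..<d}"
  define r where "r j = y j \<ominus>\<^bsub>R\<^esub> ?S j" for j
  have rV: "r \<in> V" and r_piv: "\<And>l. l < d \<Longrightarrow> r (piv l) = \<zero>\<^bsub>R\<^esub>"
    using echelon_remainder[OF V B y] unfolding r_def[abs_def] by blast+
  have Sc: "?S j \<in> carrier R" for j using yc vc by (auto intro!: R.finsum_closed)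
  have rc: "r j \<in> carrier R" for j using Qp_subspace_carrier[OF V rV] .
  have y_eq: "y j = ?S j \<oplus>\<^bsub>R\<^esub> r j" for j
    using R.add.inv_solve_right'[OF rc[of j] yc[of j] Sc[of j]] R.a_comm[OF rc[of j] Sc[of j]]
    unfolding r_def a_minus_def by simp
  show ?thesis
  proof (cases "\<forall>j. r j = \<zero>\<^bsub>R\<^esub>")
    case True
    hence "y j = ?S j" for j using y_eq[of j] Sc[of j] by (metis R.r_zero)
    hence "echelon_span d piv v y" unfolding echelon_span_def by blast
    thus ?thesis using that B by blast
  next
    case False
    show ?thesis
    proof (rule Qp_subspace_normalize[OF V rV False])
      fix js w assume w: "w \<in> V" "\<And>j. w j \<in> Zp p" "w js = \<one>\<^bsub>R\<^esub>"
        "\<And>j. r j = r js \<otimes>\<^bsub>R\<^esub> w j" "\<And>j. r j = \<zero>\<^bsub>R\<^esub> \<Longrightarrow> w j = \<zero>\<^bsub>R\<^esub>"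
      have w_piv: "w (piv l) = \<zero>\<^bsub>R\<^esub>" if "l < d" for l using w(5) r_piv[OF that] .
      show ?thesis
      proof (rule that)
        show "echelon_basis V (Suc d) (piv(d := js)) (echelon_insert d v js w)"
          by (rule echelon_basis_insert[OF V B w(1-3) w_piv])
        have "y j = ?S j \<oplus>\<^bsub>R\<^esub> r js \<otimes>\<^bsub>R\<^esub> w j" for j
          using y_eq[of j] w(4)[of j] by simp
        thus "echelon_span (Suc d) (piv(d := js)) (echelon_insert d v js w) y"
          by (rule echelon_span_insert[OF V B w(1,3) y rc])
        fix x assume x: "x \<in> V" "echelon_span d piv v x"
        have "x j = finsum R (\<lambda>k. x (piv k) \<otimes>\<^bsub>R\<^esub> v k j) {..<d} \<oplus>\<^bsub>R\<^esub> \<zero>\<^bsub>R\<^esub> \<otimes>\<^bsub>R\<^esub> w j" for j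
          using x(2) Qp_subspace_carrier[OF V x(1)] Qp_subspace_carrier[OF V w(1)]
          unfolding echelon_span_def by (metis R.l_null R.r_zero)
        thus "echelon_span (Suc d) (piv(d := js)) (echelon_insert d v js w) x"
          by (rule echelon_span_insert[OF V B w(1,3) x(1) R.zero_closed])
      qed
    qed
  qed
qed

lemma echelon_basis_exists:
  fixes m :: nat and x :: "nat \<Rightarrow> qpseq"
  assumes V: "Qp_subspace V"
  shows "(\<And>i. i < m \<Longrightarrow> x i \<in> V) \<Longrightarrow> \<exists>d piv v. echelon_basis V d piv v \<and> (\<forall>i<m. echelon_span d piv v (x i))"
proof (induction m)
  case 0
  show ?case by (intro exI[of _ 0]) (simp add: echelon_basis_def)
next
  case (Suc m)
  hence "\<exists>d piv v. echelon_basis V d piv v \<and> (\<forall>i<m. echelon_span d piv v (x i))" by simp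
  then obtain d piv v where B: "echelon_basis V d piv v" "\<forall>i<m. echelon_span d piv v (x i)" by blast
  obtain d' piv' v' where B': "echelon_basis V d' piv' v'" "echelon_span d' piv' v' (x m)"
    "\<And>y. y \<in> V \<Longrightarrow> echelon_span d piv v y \<Longrightarrow> echelon_span d' piv' v' y"
    using echelon_basis_extend[OF V B(1) Suc.prems[of m]] by blast
  have "echelon_span d' piv' v' (x i)" if "i < Suc m" for i
    using B(2) B'(2,3) Suc.prems that by (cases "i = m") auto
  thus ?case using B'(1) by blast
qed

end

section \<open>Idempotents whose tail columns are integral\<close>

locale tail_integral_idempotent = padic +
  fixes e :: "qpseq \<Rightarrow> qpseq" and n :: nat
  assumes idempotent: "idempotent_op p e"
    and tail_columns: "\<forall>i>n. \<forall>j. qp_norm p (e (delta p i) j) \<le> 1"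
begin

abbreviation column :: "nat \<Rightarrow> qpseq" where
  "column i \<equiv> e (delta p i)"

definition supported_upto :: "qpseq set" where
  "supported_upto = {\<zeta>. (\<forall>i. \<zeta> i \<in> carrier R) \<and> (\<forall>i>n. \<zeta> i = \<zero>\<^bsub>R\<^esub>)}"

definition col_span :: "qpseq set" where
  "col_span = e ` supported_upto"

lemma e_linear: "zp_linear p e"
  using idempotent unfolding idempotent_op_def bounded_ops_def by blast

lemma e_continuous: "continuous_map (tau p) (tau p) e"
  using idempotent unfolding idempotent_op_def bounded_ops_def by blast

lemma e_idem: "\<xi> \<in> QpN p \<Longrightarrow> e (e \<xi>) = e \<xi>"
  using idempotent unfolding idempotent_op_def by blast

lemma column_carrier: "column i j \<in> carrier R"
  using zp_linear_QpN[OF e_linear delta_in_QpN] by (simp add: QpN_carrier)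

lemma tail_column_Zp: "i > n \<Longrightarrow> column i j \<in> Zp p"
  unfolding Zp_iff using tail_columns column_carrier by simp

lemma supported_upto_QpN: "\<zeta> \<in> supported_upto \<Longrightarrow> \<zeta> \<in> QpN p"
  using finite_support_in_QpN[of \<zeta> n] unfolding supported_upto_def by simp

lemma e_supported_upto:
  "\<zeta> \<in> supported_upto \<Longrightarrow> e \<zeta> = (\<lambda>j. finsum R (\<lambda>i. \<zeta> i \<otimes>\<^bsub>R\<^esub> column i j) {..n})"
  unfolding supported_upto_def by (intro zp_linear_finite_support[OF e_linear]) auto

lemma col_span_fixed: "\<eta> \<in> col_span \<Longrightarrow> e \<eta> = \<eta>"
  unfolding col_span_def using e_idem supported_upto_QpN by auto

lemma Qp_subspace_col_span: "Qp_subspace col_span"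
  unfolding Qp_subspace_def
proof (intro conjI ballI)
  show "col_span \<subseteq> QpN p"
    unfolding col_span_def using zp_linear_QpN[OF e_linear] supported_upto_QpN by blast
  have mem: "(\<lambda>j. \<zero>\<^bsub>R\<^esub>) \<in> supported_upto" unfolding supported_upto_def by simp
  have "e (\<lambda>j. \<zero>\<^bsub>R\<^esub>) = (\<lambda>j. \<zero>\<^bsub>R\<^esub>)"
    using zp_linear_smult[OF e_linear Zp_zero supported_upto_QpN[OF mem]]
      zp_linear_QpN[OF e_linear supported_upto_QpN[OF mem]] by (simp add: QpN_carrier)
  thus "(\<lambda>j. \<zero>\<^bsub>R\<^esub>) \<in> col_span" unfolding col_span_def using mem by (rule image_eqI[OF sym])
next
  fix v w assume "v \<in> col_span" "w \<in> col_span"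
  then obtain \<zeta> \<zeta>' where \<zeta>: "\<zeta> \<in> supported_upto" "v = e \<zeta>" and \<zeta>': "\<zeta>' \<in> supported_upto" "w = e \<zeta>'"
    unfolding col_span_def by blast
  have mem: "(\<lambda>j. \<zeta> j \<oplus>\<^bsub>R\<^esub> \<zeta>' j) \<in> supported_upto" using \<zeta> \<zeta>' unfolding supported_upto_def by simp
  have "e (\<lambda>j. \<zeta> j \<oplus>\<^bsub>R\<^esub> \<zeta>' j) = (\<lambda>j. v j \<oplus>\<^bsub>R\<^esub> w j)"
    unfolding \<zeta>(2) \<zeta>'(2) by (rule zp_linear_add[OF e_linear supported_upto_QpN supported_upto_QpN]) fact+
  thus "(\<lambda>j. v j \<oplus>\<^bsub>R\<^esub> w j) \<in> col_span" unfolding col_span_def using mem by (rule image_eqI[OF sym])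
next
  fix a v assume a: "a \<in> carrier R" and "v \<in> col_span"
  then obtain \<zeta> where \<zeta>: "\<zeta> \<in> supported_upto" "v = e \<zeta>" unfolding col_span_def by blast
  have mem: "(\<lambda>j. a \<otimes>\<^bsub>R\<^esub> \<zeta> j) \<in> supported_upto" using a \<zeta> unfolding supported_upto_def by simp
  have "e (\<lambda>j. a \<otimes>\<^bsub>R\<^esub> \<zeta> j) = (\<lambda>j. a \<otimes>\<^bsub>R\<^esub> v j)"
    unfolding \<zeta>(2) by (rule zp_linear_qp_smult[OF e_linear a supported_upto_QpN supported_upto_QpN]) fact+
  thus "(\<lambda>j. a \<otimes>\<^bsub>R\<^esub> v j) \<in> col_span" unfolding col_span_def using mem by (rule image_eqI[OF sym])
qed

lemma column_in_col_span: "i \<le> n \<Longrightarrow> column i \<in> col_span"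
  unfolding col_span_def supported_upto_def delta_eq by (intro image_eqI[OF refl]) simp

lemma qp_span_upto_eq_col_span: "qp_span_upto p n (\<lambda>i. e (delta p i)) = col_span"
proof -
  let ?lc = "\<lambda>c. (\<lambda>j. foldr (qp_add p) (map (\<lambda>i. qp_mult p (c i) (column i j)) [0..<Suc n]) (qp_zero p))"
  let ?ext = "\<lambda>c. (\<lambda>i. if i \<le> n then c i else \<zero>\<^bsub>R\<^esub>)"
  have lc: "?lc c = e (?ext c)" and ext: "?ext c \<in> supported_upto" if "\<forall>i\<le>n. c i \<in> carrier R" for c
  proof -
    have "set [0..<Suc n] = {..n}" by auto
    hence fold: "foldr (qp_add p) (map (\<lambda>i. qp_mult p (c i) (column i j)) [0..<Suc n]) (qp_zero p)
        = finsum R (\<lambda>i. c i \<otimes>\<^bsub>R\<^esub> column i j) {..n}" for j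
      using foldr_add_eq_finsum[of "[0..<Suc n]" "\<lambda>i. c i \<otimes>\<^bsub>R\<^esub> column i j"] that column_carrier
      by simp
    show "?ext c \<in> supported_upto" using that unfolding supported_upto_def by simp
    hence "e (?ext c) = (\<lambda>j. finsum R (\<lambda>i. ?ext c i \<otimes>\<^bsub>R\<^esub> column i j) {..n})"
      by (rule e_supported_upto)
    also have "\<dots> = (\<lambda>j. finsum R (\<lambda>i. c i \<otimes>\<^bsub>R\<^esub> column i j) {..n})"
      using that column_carrier by (intro ext R.finsum_cong') simp_all
    finally show "?lc c = e (?ext c)" using fold by simp
  qed
  have ext_id: "?ext \<zeta> = \<zeta>" if "\<zeta> \<in> supported_upto" for \<zeta>
    using that unfolding supported_upto_def by (simp add: fun_eq_iff not_le)
  show ?thesis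
  proof (intro equalityI subsetI)
    fix \<eta> assume "\<eta> \<in> qp_span_upto p n (\<lambda>i. e (delta p i))"
    then obtain c where c: "\<forall>i\<le>n. c i \<in> carrier R" "\<eta> = ?lc c"
      unfolding qp_span_upto_def Qp_ring_ops by blast
    show "\<eta> \<in> col_span" unfolding col_span_def c(2) lc[OF c(1)] using ext[OF c(1)] by (rule imageI)
  next
    fix \<eta> assume "\<eta> \<in> col_span"
    then obtain \<zeta> where \<zeta>: "\<zeta> \<in> supported_upto" "\<eta> = e \<zeta>" unfolding col_span_def by blast
    have "\<forall>i\<le>n. \<zeta> i \<in> carrier R" using \<zeta>(1) unfolding supported_upto_def by blast
    moreover have "\<eta> = ?lc \<zeta>" using lc[OF calculation] ext_id[OF \<zeta>(1)] \<zeta>(2) by simp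
    ultimately show "\<eta> \<in> qp_span_upto p n (\<lambda>i. e (delta p i))"
      unfolding qp_span_upto_def Qp_ring_ops by blast
  qed
qed


lemma col_span_echelon_basis:
  obtains d piv v W where "echelon_basis col_span d piv v" "\<And>i. i \<le> n \<Longrightarrow> echelon_span d piv v (column i)"
    "\<And>k. k < d \<Longrightarrow> W k \<in> supported_upto" "\<And>k. k < d \<Longrightarrow> v k = e (W k)"
proof -
  obtain d piv v where B: "echelon_basis col_span d piv v" "\<forall>i<Suc n. echelon_span d piv v (column i)"
    using echelon_basis_exists[OF Qp_subspace_col_span, of "Suc n" column] column_in_col_span by auto
  have "\<forall>k. \<exists>\<zeta>. k < d \<longrightarrow> \<zeta> \<in> supported_upto \<and> v k = e \<zeta>"
    using B(1) unfolding echelon_basis_def col_span_def by blast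
  hence "\<exists>W. \<forall>k. k < d \<longrightarrow> W k \<in> supported_upto \<and> v k = e (W k)" by (rule choice)
  then obtain W where W: "\<forall>k. k < d \<longrightarrow> W k \<in> supported_upto \<and> v k = e (W k)" by blast
  show ?thesis
  proof (rule that[OF B(1)])
    show "echelon_span d piv v (column i)" if "i \<le> n" for i using B(2) that by simp
  qed (use W in simp_all)
qed

end

locale tail_integral_echelon = tail_integral_idempotent +
  fixes d :: nat and piv :: "nat \<Rightarrow> nat" and v :: "nat \<Rightarrow> qpseq" and W :: "nat \<Rightarrow> qpseq"
  assumes basis: "echelon_basis col_span d piv v"
    and columns_span: "\<And>i. i \<le> n \<Longrightarrow> echelon_span d piv v (column i)"
    and W_supported: "\<And>k. k < d \<Longrightarrow> W k \<in> supported_upto"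
    and v_eq: "\<And>k. k < d \<Longrightarrow> v k = e (W k)"
begin

definition pivot_proj :: "qpseq \<Rightarrow> qpseq" where
  "pivot_proj \<eta> = (\<lambda>j. finsum R (\<lambda>k. \<eta> (piv k) \<otimes>\<^bsub>R\<^esub> v k j) {..<d})"

text \<open>\<open>f = e \<circ> f_lift\<close>, where \<open>f_lift \<xi>\<close> is supported in \<open>{..n}\<close>; this factorisation makes \<open>f\<close> and
  \<open>e - f = e \<circ> (id - f_lift)\<close> visibly \<open>\<tau>\<close>-continuous.\<close>
definition f_lift :: "qpseq \<Rightarrow> qpseq" where
  "f_lift \<xi> = (\<lambda>i. finsum R (\<lambda>k. e \<xi> (piv k) \<otimes>\<^bsub>R\<^esub> W k i) {..<d})"

definition f_op :: "qpseq \<Rightarrow> qpseq" where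
  "f_op \<xi> = e (f_lift \<xi>)"

lemma v_in_col_span: "k < d \<Longrightarrow> v k \<in> col_span"
  using basis unfolding echelon_basis_def by blast

lemma v_Zp: "k < d \<Longrightarrow> v k j \<in> Zp p"
  using basis unfolding echelon_basis_def by blast

lemma v_carrier: "k < d \<Longrightarrow> v k j \<in> carrier R"
  using Zp_carrier[OF v_Zp] .

lemma W_carrier: "k < d \<Longrightarrow> W k i \<in> carrier R"
  using W_supported unfolding supported_upto_def by blast

lemma v_expansion: "k < d \<Longrightarrow> v k j = finsum R (\<lambda>i. W k i \<otimes>\<^bsub>R\<^esub> column i j) {..n}"
  using v_eq e_supported_upto W_supported by simp

lemma pivot_proj_carrier: "(\<And>i. \<eta> i \<in> carrier R) \<Longrightarrow> pivot_proj \<eta> j \<in> carrier R"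
  unfolding pivot_proj_def using v_carrier by (auto intro!: R.finsum_closed)

lemma pivot_proj_in_col_span: "(\<And>i. \<eta> i \<in> carrier R) \<Longrightarrow> pivot_proj \<eta> \<in> col_span"
  unfolding pivot_proj_def by (intro Qp_subspace_lincomb[OF Qp_subspace_col_span] v_in_col_span)

lemma pivot_proj_Zp: "(\<And>i. \<eta> i \<in> Zp p) \<Longrightarrow> pivot_proj \<eta> j \<in> Zp p"
  unfolding pivot_proj_def by (intro Zp_finsum Zp_mult v_Zp) auto

lemma pivot_proj_column: "i \<le> n \<Longrightarrow> pivot_proj (column i) = column i"
proof
  fix j assume "i \<le> n"
  thus "pivot_proj (column i) j = column i j"
    using columns_span unfolding echelon_span_def pivot_proj_def by (metis (no_types))
qed

lemma pivot_proj_supported: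
  assumes "\<zeta> \<in> QpN p" "\<And>i. N < i \<Longrightarrow> \<zeta> i = \<zero>\<^bsub>R\<^esub>"
  shows "pivot_proj (e \<zeta>) j = finsum R (\<lambda>i. \<zeta> i \<otimes>\<^bsub>R\<^esub> pivot_proj (column i) j) {..N}"
proof -
  have e\<zeta>: "e \<zeta> = (\<lambda>j. finsum R (\<lambda>i. \<zeta> i \<otimes>\<^bsub>R\<^esub> column i j) {..N})"
    using assms by (intro zp_linear_finite_support[OF e_linear]) (simp_all add: QpN_carrier)
  show ?thesis
    unfolding pivot_proj_def e\<zeta> using assms(1) column_carrier v_carrier
    by (intro finsum_linear_combination_swap) (simp_all add: QpN_carrier)
qed

lemma pivot_proj_col_span: "\<eta> \<in> col_span \<Longrightarrow> pivot_proj \<eta> = \<eta>"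
proof -
  assume "\<eta> \<in> col_span"
  then obtain \<zeta> where \<zeta>: "\<zeta> \<in> supported_upto" "\<eta> = e \<zeta>" unfolding col_span_def by blast
  have \<zeta>c: "\<zeta> i \<in> carrier R" and \<zeta>0: "i > n \<Longrightarrow> \<zeta> i = \<zero>\<^bsub>R\<^esub>" for i
    using \<zeta>(1) unfolding supported_upto_def by simp_all
  have "pivot_proj (e \<zeta>) j = e \<zeta> j" for j
  proof -
    have "pivot_proj (e \<zeta>) j = finsum R (\<lambda>i. \<zeta> i \<otimes>\<^bsub>R\<^esub> pivot_proj (column i) j) {..n}"
      using supported_upto_QpN[OF \<zeta>(1)] \<zeta>0 by (rule pivot_proj_supported)
    also have "\<dots> = finsum R (\<lambda>i. \<zeta> i \<otimes>\<^bsub>R\<^esub> column i j) {..n}"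
      using \<zeta>c column_carrier pivot_proj_column by (intro R.finsum_cong') simp_all
    also have "\<dots> = e \<zeta> j" using e_supported_upto[OF \<zeta>(1)] by simp
    finally show ?thesis .
  qed
  thus "pivot_proj \<eta> = \<eta>" unfolding \<zeta>(2) by (rule ext)
qed

lemma zp_linear_pivot_proj: "zp_linear p pivot_proj"
  unfolding zp_linear_def seq_add_eq seq_smult_eq
proof (intro conjI ballI)
  fix \<eta> \<eta>' assume \<eta>: "\<eta> \<in> QpN p" and \<eta>': "\<eta>' \<in> QpN p"
  have "pivot_proj \<eta> \<in> col_span" using \<eta> by (intro pivot_proj_in_col_span QpN_carrier)
  thus "pivot_proj \<eta> \<in> QpN p" using Qp_subspace_col_span unfolding Qp_subspace_def by blast
  show "pivot_proj (\<lambda>i. \<eta> i \<oplus>\<^bsub>R\<^esub> \<eta>' i) = (\<lambda>j. pivot_proj \<eta> j \<oplus>\<^bsub>R\<^esub> pivot_proj \<eta>' j)"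
  proof
    fix j
    have "pivot_proj (\<lambda>i. \<eta> i \<oplus>\<^bsub>R\<^esub> \<eta>' i) j
        = finsum R (\<lambda>k. \<eta> (piv k) \<otimes>\<^bsub>R\<^esub> v k j \<oplus>\<^bsub>R\<^esub> \<eta>' (piv k) \<otimes>\<^bsub>R\<^esub> v k j) {..<d}"
      unfolding pivot_proj_def using \<eta> \<eta>' v_carrier
      by (intro R.finsum_cong') (simp_all add: QpN_carrier R.l_distr)
    also have "\<dots> = pivot_proj \<eta> j \<oplus>\<^bsub>R\<^esub> pivot_proj \<eta>' j"
      unfolding pivot_proj_def using \<eta> \<eta>' v_carrier by (intro R.finsum_addf) (simp_all add: QpN_carrier)
    finally show "pivot_proj (\<lambda>i. \<eta> i \<oplus>\<^bsub>R\<^esub> \<eta>' i) j = pivot_proj \<eta> j \<oplus>\<^bsub>R\<^esub> pivot_proj \<eta>' j" .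
  qed
next
  fix a \<eta> assume a: "a \<in> Zp p" and \<eta>: "\<eta> \<in> QpN p"
  show "pivot_proj (\<lambda>i. a \<otimes>\<^bsub>R\<^esub> \<eta> i) = (\<lambda>j. a \<otimes>\<^bsub>R\<^esub> pivot_proj \<eta> j)"
  proof
    fix j
    have "pivot_proj (\<lambda>i. a \<otimes>\<^bsub>R\<^esub> \<eta> i) j = finsum R (\<lambda>k. a \<otimes>\<^bsub>R\<^esub> (\<eta> (piv k) \<otimes>\<^bsub>R\<^esub> v k j)) {..<d}"
      unfolding pivot_proj_def using Zp_carrier[OF a] \<eta> v_carrier
      by (intro R.finsum_cong') (simp_all add: QpN_carrier R.m_assoc)
    also have "\<dots> = a \<otimes>\<^bsub>R\<^esub> pivot_proj \<eta> j"
      unfolding pivot_proj_def using Zp_carrier[OF a] \<eta> v_carrier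
      by (intro R.finsum_rdistr[symmetric]) (simp_all add: QpN_carrier)
    finally show "pivot_proj (\<lambda>i. a \<otimes>\<^bsub>R\<^esub> \<eta> i) j = a \<otimes>\<^bsub>R\<^esub> pivot_proj \<eta> j" .
  qed
qed


lemma f_lift_supported: "\<xi> \<in> QpN p \<Longrightarrow> f_lift \<xi> \<in> supported_upto"
proof -
  assume \<xi>: "\<xi> \<in> QpN p"
  have e\<xi>: "e \<xi> j \<in> carrier R" for j using zp_linear_QpN[OF e_linear \<xi>] by (rule QpN_carrier)
  have "f_lift \<xi> i = \<zero>\<^bsub>R\<^esub>" if "i > n" for i
  proof -
    have "f_lift \<xi> i = finsum R (\<lambda>k. \<zero>\<^bsub>R\<^esub>) {..<d}"
      unfolding f_lift_def using W_supported that e\<xi> unfolding supported_upto_def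
      by (intro R.finsum_cong') simp_all
    thus ?thesis by simp
  qed
  moreover have "f_lift \<xi> i \<in> carrier R" for i
    unfolding f_lift_def using e\<xi> W_carrier by (intro R.finsum_closed) auto
  ultimately show ?thesis unfolding supported_upto_def by blast
qed

lemma f_op_eq: "\<xi> \<in> QpN p \<Longrightarrow> f_op \<xi> = pivot_proj (e \<xi>)"
proof
  fix j assume \<xi>: "\<xi> \<in> QpN p"
  have e\<xi>: "e \<xi> j \<in> carrier R" for j using zp_linear_QpN[OF e_linear \<xi>] by (rule QpN_carrier)
  have "f_op \<xi> j = finsum R (\<lambda>i. f_lift \<xi> i \<otimes>\<^bsub>R\<^esub> column i j) {..n}"
    unfolding f_op_def using e_supported_upto[OF f_lift_supported[OF \<xi>]] by simp
  also have "\<dots> = finsum R (\<lambda>k. e \<xi> (piv k) \<otimes>\<^bsub>R\<^esub> finsum R (\<lambda>i. W k i \<otimes>\<^bsub>R\<^esub> column i j) {..n}) {..<d}"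
    unfolding f_lift_def using e\<xi> W_carrier column_carrier by (intro finsum_linear_combination_swap) auto
  also have "\<dots> = pivot_proj (e \<xi>) j"
    unfolding pivot_proj_def using e\<xi> v_carrier by (intro R.finsum_cong') (simp_all add: v_expansion)
  finally show "f_op \<xi> j = pivot_proj (e \<xi>) j" .
qed

lemma zp_linear_f_op: "zp_linear p f_op"
  by (rule zp_linear_compose_cong[OF zp_linear_pivot_proj e_linear f_op_eq])

lemma f_op_col_span: "\<xi> \<in> QpN p \<Longrightarrow> f_op \<xi> \<in> col_span"
  using f_op_eq pivot_proj_in_col_span zp_linear_QpN[OF e_linear] QpN_carrier by simp

lemma f_op_e: "\<xi> \<in> QpN p \<Longrightarrow> f_op (e \<xi>) = f_op \<xi> \<and> e (f_op \<xi>) = f_op \<xi>"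
  using f_op_eq e_idem zp_linear_QpN[OF e_linear] col_span_fixed f_op_col_span by simp

lemma f_op_idem: "\<xi> \<in> QpN p \<Longrightarrow> f_op (f_op \<xi>) = f_op \<xi>"
  using f_op_eq zp_linear_QpN[OF zp_linear_f_op] col_span_fixed f_op_col_span pivot_proj_col_span
  by simp

lemma f_op_image: "f_op ` QpN p = col_span"
proof (intro equalityI subsetI)
  fix \<eta> assume "\<eta> \<in> f_op ` QpN p"
  thus "\<eta> \<in> col_span" using f_op_col_span by blast
next
  fix \<eta> assume \<eta>: "\<eta> \<in> col_span"
  then obtain \<zeta> where \<zeta>: "\<zeta> \<in> supported_upto" "\<eta> = e \<zeta>" unfolding col_span_def by blast
  have "f_op \<zeta> = \<eta>" using f_op_eq[OF supported_upto_QpN[OF \<zeta>(1)]] pivot_proj_col_span[OF \<eta>] \<zeta>(2)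
    by simp
  thus "\<eta> \<in> f_op ` QpN p" using supported_upto_QpN[OF \<zeta>(1)] by (rule image_eqI[OF sym])
qed

lemma continuous_f_lift_coord:
  "finite P \<Longrightarrow> continuous_map (box_top p P) (qp_top p) (\<lambda>\<xi>. f_lift \<xi> i)"
proof -
  assume P: "finite P"
  have "continuous_map (box_top p P) (qp_top p) (\<lambda>\<xi>. finsum R (\<lambda>k. W k i \<otimes>\<^bsub>R\<^esub> e \<xi> (piv k)) {..<d})"
    by (intro continuous_map_qp_finsum continuous_map_qp_mult_const continuous_map_tau_coord[OF e_continuous P])
      (simp_all add: W_carrier)
  moreover have "finsum R (\<lambda>k. W k i \<otimes>\<^bsub>R\<^esub> e \<xi> (piv k)) {..<d} = f_lift \<xi> i"
    if "\<xi> \<in> topspace (box_top p P)" for \<xi>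
  proof -
    have "e \<xi> j \<in> carrier R" for j
      using zp_linear_QpN[OF e_linear] box_top_subset_QpN[OF P] that QpN_carrier by blast
    thus ?thesis unfolding f_lift_def using W_carrier by (intro R.finsum_cong') (simp_all add: R.m_comm)
  qed
  ultimately show ?thesis by (rule continuous_map_eq)
qed

lemma continuous_f_lift: "continuous_map (tau p) (tau p) f_lift"
proof (rule continuous_map_tauI)
  fix P :: "nat set" assume P: "finite P"
  have "f_lift \<xi> \<in> topspace (box_top p {..n})" if "\<xi> \<in> topspace (box_top p P)" for \<xi>
    using f_lift_supported[of \<xi>] box_top_subset_QpN[OF P] that
    unfolding topspace_box_top supported_upto_def by (auto simp: not_le)
  thus "\<exists>P'. finite P' \<and> (\<forall>\<xi>\<in>topspace (box_top p P). f_lift \<xi> \<in> topspace (box_top p P'))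
      \<and> (\<forall>i. continuous_map (box_top p P) (qp_top p) (\<lambda>\<xi>. f_lift \<xi> i))"
    using continuous_f_lift_coord[OF P] by blast
qed

lemma continuous_f_op: "continuous_map (tau p) (tau p) f_op"
  unfolding f_op_def using continuous_map_compose[OF continuous_f_lift e_continuous]
  by (simp add: comp_def)

lemma continuous_id_minus_f_lift: "continuous_map (tau p) (tau p) (\<lambda>\<xi> i. \<xi> i \<ominus>\<^bsub>R\<^esub> f_lift \<xi> i)"
proof (rule continuous_map_tauI)
  fix P :: "nat set" assume P: "finite P"
  have "(\<lambda>i. \<xi> i \<ominus>\<^bsub>R\<^esub> f_lift \<xi> i) \<in> topspace (box_top p (P \<union> {..n}))"
    if \<xi>: "\<xi> \<in> topspace (box_top p P)" for \<xi>
  proof -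
    have "f_lift \<xi> \<in> supported_upto" using box_top_subset_QpN[OF P] \<xi> by (blast intro: f_lift_supported)
    hence F: "f_lift \<xi> i \<in> carrier R" "i > n \<Longrightarrow> f_lift \<xi> i = \<zero>\<^bsub>R\<^esub>" for i
      unfolding supported_upto_def by blast+
    show ?thesis unfolding topspace_box_top
    proof (intro CollectI allI conjI impI)
      fix i
      show "\<xi> i \<ominus>\<^bsub>R\<^esub> f_lift \<xi> i \<in> carrier R" using \<xi> F(1) unfolding topspace_box_top by simp
      assume "i \<notin> P \<union> {..n}"
      thus "\<xi> i \<ominus>\<^bsub>R\<^esub> f_lift \<xi> i \<in> Zp p"
        using \<xi> F(2)[of i] unfolding topspace_box_top by (simp add: a_minus_def Zp_carrier)
    qed
  qed
  moreover have "continuous_map (box_top p P) (qp_top p) (\<lambda>\<xi>. \<xi> i \<ominus>\<^bsub>R\<^esub> f_lift \<xi> i)" for i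
    by (intro continuous_map_qp_diff continuous_map_box_top_coord continuous_f_lift_coord P)
  ultimately show "\<exists>P'. finite P' \<and>
      (\<forall>\<xi>\<in>topspace (box_top p P). (\<lambda>i. \<xi> i \<ominus>\<^bsub>R\<^esub> f_lift \<xi> i) \<in> topspace (box_top p P'))
      \<and> (\<forall>i. continuous_map (box_top p P) (qp_top p) (\<lambda>\<xi>. \<xi> i \<ominus>\<^bsub>R\<^esub> f_lift \<xi> i))"
    using P by blast
qed

lemma e_minus_f_op_eq: "\<xi> \<in> QpN p \<Longrightarrow> op_diff p e f_op \<xi> = e (\<lambda>i. \<xi> i \<ominus>\<^bsub>R\<^esub> f_lift \<xi> i)"
  using zp_linear_diff[OF e_linear _ supported_upto_QpN[OF f_lift_supported]]
  by (simp add: op_diff_eq e_linear zp_linear_f_op f_op_def)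

lemma continuous_e_minus_f_op: "continuous_map (tau p) (tau p) (op_diff p e f_op)"
proof (rule continuous_map_eq)
  show "continuous_map (tau p) (tau p) (e \<circ> (\<lambda>\<xi> i. \<xi> i \<ominus>\<^bsub>R\<^esub> f_lift \<xi> i))"
    by (rule continuous_map_compose[OF continuous_id_minus_f_lift e_continuous])
qed (simp add: e_minus_f_op_eq)

text \<open>On finitely supported integral vectors, \<open>e - f\<close> is a sum of integral multiples of the
  vectors \<open>column i - pivot_proj (column i)\<close>, which vanish for \<open>i \<le> n\<close> and are integral for
  \<open>i > n\<close>; continuity extends integrality to all integral vectors.\<close>
lemma e_minus_f_op_Zp:
  assumes "\<And>i. \<xi> i \<in> Zp p"
  shows "op_diff p e f_op \<xi> j \<in> Zp p"
proof (rule tau_continuous_Zp_by_truncation[OF continuous_e_minus_f_op _ assms])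
  fix \<zeta> :: qpseq and N :: nat
  assume \<zeta>: "\<And>i. \<zeta> i \<in> Zp p" "\<And>i. N < i \<Longrightarrow> \<zeta> i = \<zero>\<^bsub>R\<^esub>"
  have \<zeta>c: "\<zeta> i \<in> carrier R" for i using Zp_carrier[OF \<zeta>(1)] .
  have \<zeta>Q: "\<zeta> \<in> QpN p" using \<zeta>(1) by (rule Zp_valued_in_QpN)
  have pc: "pivot_proj (column i) j \<in> carrier R" for i by (rule pivot_proj_carrier[OF column_carrier])
  have "op_diff p e f_op \<zeta> j = e \<zeta> j \<ominus>\<^bsub>R\<^esub> pivot_proj (e \<zeta>) j"
    using \<zeta>Q by (simp add: op_diff_eq e_linear zp_linear_f_op f_op_eq)
  also have "\<dots> = finsum R (\<lambda>i. \<zeta> i \<otimes>\<^bsub>R\<^esub> column i j) {..N} \<ominus>\<^bsub>R\<^esub>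
      finsum R (\<lambda>i. \<zeta> i \<otimes>\<^bsub>R\<^esub> pivot_proj (column i) j) {..N}"
    using zp_linear_finite_support[OF e_linear \<zeta>c \<zeta>(2)] pivot_proj_supported[OF \<zeta>Q \<zeta>(2)] by simp
  also have "\<dots> = finsum R (\<lambda>i. \<zeta> i \<otimes>\<^bsub>R\<^esub> (column i j \<ominus>\<^bsub>R\<^esub> pivot_proj (column i) j)) {..N}"
  proof -
    have "x \<otimes>\<^bsub>R\<^esub> y \<ominus>\<^bsub>R\<^esub> x \<otimes>\<^bsub>R\<^esub> z = x \<otimes>\<^bsub>R\<^esub> (y \<ominus>\<^bsub>R\<^esub> z)"
      if "x \<in> carrier R" "y \<in> carrier R" "z \<in> carrier R" for x y z
      using that by (simp add: a_minus_def R.r_distr R.r_minus)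
    hence "finsum R (\<lambda>i. \<zeta> i \<otimes>\<^bsub>R\<^esub> column i j \<ominus>\<^bsub>R\<^esub> \<zeta> i \<otimes>\<^bsub>R\<^esub> pivot_proj (column i) j) {..N}
        = finsum R (\<lambda>i. \<zeta> i \<otimes>\<^bsub>R\<^esub> (column i j \<ominus>\<^bsub>R\<^esub> pivot_proj (column i) j)) {..N}"
      using \<zeta>c column_carrier pc by (intro R.finsum_cong') simp_all
    moreover have "finsum R (\<lambda>i. \<zeta> i \<otimes>\<^bsub>R\<^esub> column i j \<ominus>\<^bsub>R\<^esub> \<zeta> i \<otimes>\<^bsub>R\<^esub> pivot_proj (column i) j) {..N}
        = finsum R (\<lambda>i. \<zeta> i \<otimes>\<^bsub>R\<^esub> column i j) {..N} \<ominus>\<^bsub>R\<^esub>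
          finsum R (\<lambda>i. \<zeta> i \<otimes>\<^bsub>R\<^esub> pivot_proj (column i) j) {..N}"
      using \<zeta>c column_carrier pc by (intro finsum_diff) simp_all
    ultimately show ?thesis by simp
  qed
  also have "\<dots> \<in> Zp p"
  proof (rule Zp_finsum)
    fix i
    have "column i j \<ominus>\<^bsub>R\<^esub> pivot_proj (column i) j \<in> Zp p"
    proof (cases "i \<le> n")
      case True thus ?thesis using column_carrier by (simp add: pivot_proj_column a_minus_def R.r_neg)
    next
      case False thus ?thesis using tail_column_Zp by (intro Zp_diff pivot_proj_Zp) simp_all
    qed
    thus "\<zeta> i \<otimes>\<^bsub>R\<^esub> (column i j \<ominus>\<^bsub>R\<^esub> pivot_proj (column i) j) \<in> Zp p" by (rule Zp_mult[OF \<zeta>(1)])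
  qed simp
  finally show "op_diff p e f_op \<zeta> j \<in> Zp p" .
qed

lemma e_minus_f_op_norm: "\<xi> \<in> QpN p \<Longrightarrow> seq_norm p \<xi> \<le> 1 \<Longrightarrow> seq_norm p (op_diff p e f_op \<xi>) \<le> 1"
  using e_minus_f_op_Zp seq_norm_le_1_iff zp_linear_QpN[OF zp_linear_op_diff[OF e_linear zp_linear_f_op]]
  by simp


lemma f_op_solves_lemma3p13:
  "idempotent_op p f_op
   \<and> (\<forall>\<xi>\<in>QpN p. f_op (e \<xi>) = f_op \<xi> \<and> e (f_op \<xi>) = f_op \<xi>)
   \<and> f_op ` QpN p = qp_span_upto p n (\<lambda>i. e (delta p i))
   \<and> idempotent_op p (op_diff p e f_op)
   \<and> bdd_above {seq_norm p (op_diff p e f_op \<xi>) | \<xi>. \<xi> \<in> QpN p \<and> seq_norm p \<xi> \<le> 1}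
   \<and> op_norm p (op_diff p e f_op) \<le> 1"
proof (intro conjI ballI)
  show "idempotent_op p f_op"
    unfolding idempotent_op_def bounded_ops_def using zp_linear_f_op continuous_f_op f_op_idem by blast
  show "idempotent_op p (op_diff p e f_op)"
    unfolding idempotent_op_def bounded_ops_def
    using zp_linear_op_diff[OF e_linear zp_linear_f_op] continuous_e_minus_f_op
      op_diff_idempotent[OF e_linear e_idem zp_linear_f_op f_op_idem f_op_e] by blast
  show "f_op ` QpN p = qp_span_upto p n (\<lambda>i. e (delta p i))"
    unfolding qp_span_upto_eq_col_span by (rule f_op_image)
  show "bdd_above {seq_norm p (op_diff p e f_op \<xi>) | \<xi>. \<xi> \<in> QpN p \<and> seq_norm p \<xi> \<le> 1}"
    "op_norm p (op_diff p e f_op) \<le> 1"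
    using op_norm_le_1[of "op_diff p e f_op", OF e_minus_f_op_norm] by simp_all
qed (simp_all add: f_op_e)

end

theorem lemma3p13:
  fixes p n :: nat and e :: "qpseq \<Rightarrow> qpseq"
  assumes "prime p"
    and "idempotent_op p e"
    and "\<forall>i>n. \<forall>j. qp_norm p (e (delta p i) j) \<le> 1"
  shows "\<exists>f. idempotent_op p f
           \<and> (\<forall>\<xi>\<in>QpN p. f (e \<xi>) = f \<xi> \<and> e (f \<xi>) = f \<xi>)
           \<and> f ` QpN p = qp_span_upto p n (\<lambda>i. e (delta p i))
           \<and> idempotent_op p (op_diff p e f)
           \<and> bdd_above {seq_norm p (op_diff p e f \<xi>) | \<xi>. \<xi> \<in> QpN p \<and> seq_norm p \<xi> \<le> 1}
           \<and> op_norm p (op_diff p e f) \<le> 1"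
proof -
  interpret tail_integral_idempotent p e n
    by unfold_locales (fact assms)+
  obtain d piv v W where "echelon_basis col_span d piv v" "\<And>i. i \<le> n \<Longrightarrow> echelon_span d piv v (column i)"
    "\<And>k. k < d \<Longrightarrow> W k \<in> supported_upto" "\<And>k. k < d \<Longrightarrow> v k = e (W k)"
    using col_span_echelon_basis by blast
  then interpret tail_integral_echelon p e n d piv v W
    by unfold_locales
  show ?thesis using f_op_solves_lemma3p13 by blast
qed

end
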